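(* In the setting of the context, let $n=|X\setminus\delta X|$. For every $z\in\mathbb{C}$, $$\det(\chi\mathcal{M}_V\chi^*-zI)-(-1)^{n}\det(\chi\mathcal{M}_{-V}\chi^*+zI)=\sum_{H\in\mathcal{T}^{\triangle}(\Gamma;\delta X)}4^{b(H)}W_Q(z;H),$$ where $\mathcal{M}_{-V}=M-V$ (same edge weight $w$, potential $-V$).
   Context: Setting. $\Gamma=(X,A)$ is a finite connected symmetric digraph: each arc $a\in A$ has an origin $o(a)$ and a terminus $t(a)$, and there is a distinguished inverse arc $\bar a\in A$ with $o(\bar a)=t(a)$, $t(\bar a)=o(a)$, $\bar{\bar a}=a$; multiple arcs are allowed, self-loops are not. The undirected edge supporting $a$ is $|a|=|\bar a|$, and $E=\{|a|:a\in A\}$. A boundary $\delta X\subsetneq X$ (possibly empty) is fixed. Given $w:E\to\mathbb{C}$ and $V:X\to\mathbb{C}$, $(Mf)(u)=\sum_{a\in A,\,t(a)=u}w(|a|)f(o(a))$ and $\mathcal{M}_V=M+V$ ($V$ acting by multiplication). $\chi:\mathbb{C}^X\to\mathbb{C}^{X\setminus\delta X}$ is restriction, $\chi^*$ extension by zero. Put $\pi(u)=\sum_{a\in A,\,t(a)=u}w(|a|)$. Deformed graph. $\mathring\Gamma$ is the undirected multigraph with vertex set $X$ and edge set $E\cup S$, where $S=\{\sigma_u:u\in X\setminus\delta X\}$ and $\sigma_u$ is a self-loop at $u$. A self-loop counts as a cycle of length 1. A tree is connected with no cycle (isolated vertices are trees); an odd unicyclic graph is connected with exactly one cycle, of odd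 length (a tree with one self-loop qualifies). $\mathcal{H}_Q(\Gamma;\delta X)$ is the set of spanning subgraphs $H$ of $\mathring\Gamma$ each of whose connected components $W$ either contains exactly one vertex of $\delta X$ and is a tree, or contains no vertex of $\delta X$ and is odd unicyclic. $\mathcal{T}^{\triangle}(\Gamma;\delta X)$ is the set of $H\in\mathcal{H}_Q(\Gamma;\delta X)$ having at least one component whose cycle has length $\ge3$ (i.e. an odd unicyclic component without self-loop). $b(H)$ is the number of components of $H$ containing a cycle of length $\ge3$. Weights: $w_Q(z;e)=w(e)$ for $e\in E$, $w_Q(z;\sigma_u)=-z+V(u)-\pi(u)$, and $W_Q(z;H)=\prod_{e\in E(H)}w_Q(z;e)$ over all edges of $H$ including self-loops. *)

theory Defs
  imports Complex_Main "HOL-Combinatorics.Permutations"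
begin

(* Graph Gamma = (X, A) with origin og, terminus tm and arc reversal rv (a |-> a-bar).
   Undirected edge |a| is represented by the set {a, rv a}. *)

definition edge_of :: "('a \<Rightarrow> 'a) \<Rightarrow> 'a \<Rightarrow> 'a set" where
  "edge_of rv a = {a, rv a}"

definition sym_digraph :: "'v set \<Rightarrow> 'a set \<Rightarrow> ('a \<Rightarrow> 'v) \<Rightarrow> ('a \<Rightarrow> 'v) \<Rightarrow> ('a \<Rightarrow> 'a) \<Rightarrow> bool" where
  "sym_digraph X A og tm rv \<longleftrightarrow> finite X \<and> finite A \<and>
     (\<forall>a\<in>A. og a \<in> X \<and> tm a \<in> X \<and> rv a \<in> A \<and> og (rv a) = tm a \<and> tm (rv a) = og a
            \<and> rv (rv a) = a \<and> og a \<noteq> tm a)"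

definition digraph_connected :: "'v set \<Rightarrow> 'a set \<Rightarrow> ('a \<Rightarrow> 'v) \<Rightarrow> ('a \<Rightarrow> 'v) \<Rightarrow> bool" where
  "digraph_connected X A og tm \<longleftrightarrow>
     (\<forall>u\<in>X. \<forall>v\<in>X. (\<lambda>x y. \<exists>a\<in>A. og a = x \<and> tm a = y)\<^sup>*\<^sup>* u v)"

definition M_op :: "'a set \<Rightarrow> ('a \<Rightarrow> 'v) \<Rightarrow> ('a \<Rightarrow> 'v) \<Rightarrow> ('a \<Rightarrow> 'a) \<Rightarrow> ('a set \<Rightarrow> complex)
    \<Rightarrow> ('v \<Rightarrow> complex) \<Rightarrow> 'v \<Rightarrow> complex" where
  "M_op A og tm rv w f u = (\<Sum>a\<in>{a\<in>A. tm a = u}. w (edge_of rv a) * f (og a))"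

definition MV_op :: "'a set \<Rightarrow> ('a \<Rightarrow> 'v) \<Rightarrow> ('a \<Rightarrow> 'v) \<Rightarrow> ('a \<Rightarrow> 'a) \<Rightarrow> ('a set \<Rightarrow> complex)
    \<Rightarrow> ('v \<Rightarrow> complex) \<Rightarrow> ('v \<Rightarrow> complex) \<Rightarrow> 'v \<Rightarrow> complex" where
  "MV_op A og tm rv w V f u = M_op A og tm rv w f u + V u * f u"

(* matrix of chi T chi^* on the interior: entry (u,v) = (T (chi^* delta_v))(u) *)
definition op_matrix :: "(('v \<Rightarrow> complex) \<Rightarrow> 'v \<Rightarrow> complex) \<Rightarrow> 'v \<Rightarrow> 'v \<Rightarrow> complex" where
  "op_matrix T u v = T (\<lambda>x. if x = v then 1 else 0) u"

definition det_on :: "'v set \<Rightarrow> ('v \<Rightarrow> 'v \<Rightarrow> complex) \<Rightarrow> complex" where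
  "det_on S m = (\<Sum>p\<in>{p. p permutes S}. of_int (sign p) * (\<Prod>i\<in>S. m i (p i)))"

(* Deformed graph: original edges and self-loops sigma_u *)
datatype ('v, 'a) dedge = Ed "'a set" | Lp 'v

fun dends :: "('a \<Rightarrow> 'v) \<Rightarrow> ('v, 'a) dedge \<Rightarrow> 'v set" where
  "dends og (Ed e) = og ` e"
| "dends og (Lp v) = {v}"

definition dedges :: "'v set \<Rightarrow> 'v set \<Rightarrow> 'a set \<Rightarrow> ('a \<Rightarrow> 'a) \<Rightarrow> ('v, 'a) dedge set" where
  "dedges X dX A rv = Ed ` (edge_of rv ` A) \<union> Lp ` (X - dX)"

definition is_cycle :: "('a \<Rightarrow> 'v) \<Rightarrow> ('v, 'a) dedge set \<Rightarrow> ('v, 'a) dedge set \<Rightarrow> bool" where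
  "is_cycle og F C \<longleftrightarrow> C \<subseteq> F \<and> (\<exists>vs es. length vs \<ge> 1 \<and> length es = length vs \<and>
      distinct vs \<and> distinct es \<and> set es = C \<and>
      (\<forall>i<length vs. dends og (es ! i) = {vs ! i, vs ! ((i + 1) mod length vs)}))"

definition cycles :: "('a \<Rightarrow> 'v) \<Rightarrow> ('v, 'a) dedge set \<Rightarrow> ('v, 'a) dedge set set" where
  "cycles og F = {C. is_cycle og F C}"

definition comp_vertices :: "'v set \<Rightarrow> ('a \<Rightarrow> 'v) \<Rightarrow> ('v, 'a) dedge set \<Rightarrow> 'v \<Rightarrow> 'v set" where
  "comp_vertices X og F u = {v\<in>X. (\<lambda>x y. \<exists>e\<in>F. dends og e = {x, y})\<^sup>*\<^sup>* u v}"

definition components :: "'v set \<Rightarrow> ('a \<Rightarrow> 'v) \<Rightarrow> ('v, 'a) dedge set \<Rightarrow> 'v set set" where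
  "components X og F = comp_vertices X og F ` X"

definition comp_edges :: "('a \<Rightarrow> 'v) \<Rightarrow> ('v, 'a) dedge set \<Rightarrow> 'v set \<Rightarrow> ('v, 'a) dedge set" where
  "comp_edges og F W = {e\<in>F. dends og e \<subseteq> W}"

definition HQ :: "'v set \<Rightarrow> 'v set \<Rightarrow> 'a set \<Rightarrow> ('a \<Rightarrow> 'v) \<Rightarrow> ('a \<Rightarrow> 'a) \<Rightarrow> ('v, 'a) dedge set set" where
  "HQ X dX A og rv = {F. F \<subseteq> dedges X dX A rv \<and>
     (\<forall>W\<in>components X og F.
        (card (W \<inter> dX) = 1 \<and> cycles og (comp_edges og F W) = {}) \<or>
        (W \<inter> dX = {} \<and> (\<exists>C. cycles og (comp_edges og F W) = {C} \<and> odd (card C))))}"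

definition Ttri :: "'v set \<Rightarrow> 'v set \<Rightarrow> 'a set \<Rightarrow> ('a \<Rightarrow> 'v) \<Rightarrow> ('a \<Rightarrow> 'a) \<Rightarrow> ('v, 'a) dedge set set" where
  "Ttri X dX A og rv = {F\<in>HQ X dX A og rv.
     \<exists>W\<in>components X og F. \<exists>C\<in>cycles og (comp_edges og F W). card C \<ge> 3}"

definition bnum :: "'v set \<Rightarrow> ('a \<Rightarrow> 'v) \<Rightarrow> ('v, 'a) dedge set \<Rightarrow> nat" where
  "bnum X og F = card {W\<in>components X og F. \<exists>C\<in>cycles og (comp_edges og F W). card C \<ge> 3}"

definition piw :: "'a set \<Rightarrow> ('a \<Rightarrow> 'v) \<Rightarrow> ('a \<Rightarrow> 'a) \<Rightarrow> ('a set \<Rightarrow> complex) \<Rightarrow> 'v \<Rightarrow> complex" where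
  "piw A tm rv w u = (\<Sum>a\<in>{a\<in>A. tm a = u}. w (edge_of rv a))"

fun wQ :: "'a set \<Rightarrow> ('a \<Rightarrow> 'v) \<Rightarrow> ('a \<Rightarrow> 'a) \<Rightarrow> ('a set \<Rightarrow> complex) \<Rightarrow> ('v \<Rightarrow> complex)
    \<Rightarrow> complex \<Rightarrow> ('v, 'a) dedge \<Rightarrow> complex" where
  "wQ A tm rv w V z (Ed e) = w e"
| "wQ A tm rv w V z (Lp u) = - z + V u - piw A tm rv w u"

definition WQ :: "'a set \<Rightarrow> ('a \<Rightarrow> 'v) \<Rightarrow> ('a \<Rightarrow> 'a) \<Rightarrow> ('a set \<Rightarrow> complex) \<Rightarrow> ('v \<Rightarrow> complex)
    \<Rightarrow> complex \<Rightarrow> ('v, 'a) dedge set \<Rightarrow> complex" where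
  "WQ A tm rv w V z F = (\<Prod>e\<in>F. wQ A tm rv w V z e)"

end

(*
  By Cauchy--Binet both determinants expand over edge sets H of the deformed graph with
  |H| = |X - dX|: the matrices chi M_V chi^* - z and -(chi M_{-V} chi^* + z) are N W N^T for the
  unsigned, resp. signed, incidence matrix N of the deformed graph and the weights W = w_Q.  The
  coefficient of W_Q(H) is a sum over bijections f from the interior vertices onto H with u in f(u)
  and over permutations p with p(u) in f(u).  For such f, H is the functional graph of the map
  u |-> other end of f(u); its cycles of length >= 2 are the long cycles of H, and the admissible p
  are the rotations along any subset of them.  The signed and unsigned terms of p differ by
  (-1)^(number of moved vertices), so for fixed f the difference is 2^b if H has b > 0 long cycles,
  all odd, and 0 otherwise.  Every H in H_Q admits such f, a graph admitting them with only odd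
  long cycles lies in H_Q, and there are 2^b of them, one per orientation of the long cycles.
  Altogether H contributes 4^b W_Q(H) if H is in T^triangle and nothing otherwise.
*)

theory Submission
  imports Defs "HOL-Library.FuncSet" "HOL-Combinatorics.Cycles"
begin

lemma sign_cycle_of_list:
  assumes "distinct cs"
  shows "sign (cycle_of_list cs) = (-1) ^ (length cs - 1)"
  using assms
proof (induction cs rule: cycle_of_list.induct)
  case (1 i j cs)
  have ij: "i \<noteq> j" using "1.prems" by simp
  have "sign (cycle_of_list (i # j # cs)) = sign (Transposition.transpose i j) * sign (cycle_of_list (j # cs))"
    by (simp add: sign_compose permutation_swap_id permutation_of_cycle)
  also have "\<dots> = - ((-1) ^ (length (j # cs) - 1))" using 1 ij by (simp add: sign_swap_id)
  also have "\<dots> = (-1) ^ (length (i # j # cs) - 1)" by simp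
  finally show ?case .
qed simp_all

lemma funpow_apply_add: "(f ^^ m) ((f ^^ n) x) = (f ^^ (m + n)) x"
  by (simp add: funpow_add)

lemma distinct_funpow_orbit:
  fixes g :: "'a \<Rightarrow> 'a"
  assumes k: "(g ^^ k) y = y" and least: "\<And>j. 0 < j \<Longrightarrow> j < k \<Longrightarrow> (g ^^ j) y \<noteq> y"
  shows "distinct (map (\<lambda>j. (g ^^ j) y) [0..<k])"
proof -
  have neq: "(g ^^ a) y \<noteq> (g ^^ b) y" if "a < b" "b < k" for a b
  proof
    assume ab: "(g ^^ a) y = (g ^^ b) y"
    have "(g ^^ (k - b + a)) y = (g ^^ (k - b)) ((g ^^ b) y)" using ab by (simp add: funpow_add)
    also have "\<dots> = y" using k that by (simp add: funpow_apply_add)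
    finally have "(g ^^ (k - b + a)) y = y" .
    moreover have "(g ^^ (k - b + a)) y \<noteq> y" by (rule least) (use that in auto)
    ultimately show False by contradiction
  qed
  have "inj_on (\<lambda>j. (g ^^ j) y) {0..<k}"
  proof (rule inj_onI, rule ccontr)
    fix i j assume "i \<in> {0..<k}" "j \<in> {0..<k}" "(g ^^ i) y = (g ^^ j) y" "i \<noteq> j"
    thus False using neq[of i j] neq[of j i] by (cases "i < j") auto
  qed
  thus ?thesis by (simp add: distinct_map)
qed

lemma rev_index_inj:
  assumes "i < k" "j < k" "(k - i) mod k = (k - j) mod (k::nat)"
  shows "i = j"
proof (cases "i = 0")
  case True
  show ?thesis
  proof (rule ccontr)
    assume "i \<noteq> j" hence "j > 0" using True by simp
    hence "(k - j) mod k = k - j" using assms by simp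
    thus False using assms True \<open>j > 0\<close> by simp
  qed
next
  case False
  hence i: "(k - i) mod k = k - i" using assms by simp
  show ?thesis
  proof (cases "j = 0")
    case True thus ?thesis using assms i False by simp
  next
    case False
    hence "(k - j) mod k = k - j" using assms by simp
    thus ?thesis using assms i by simp
  qed
qed

definition rev_cycle :: "'v list \<Rightarrow> 'v list" where
  "rev_cycle vs = map (\<lambda>i. vs ! ((length vs - i) mod length vs)) [0..<length vs]"

lemma rev_cycle_nth: "i < length vs \<Longrightarrow> rev_cycle vs ! i = vs ! ((length vs - i) mod length vs)"
  unfolding rev_cycle_def by simp

lemma distinct_rev_cycle:
  assumes "distinct vs"
  shows "distinct (rev_cycle vs)"
proof -
  let ?k = "length vs"
  have "inj_on (\<lambda>i. vs ! ((?k - i) mod ?k)) {0..<?k}"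
  proof (rule inj_onI)
    fix i j assume ij: "i \<in> {0..<?k}" "j \<in> {0..<?k}" and "vs ! ((?k - i) mod ?k) = vs ! ((?k - j) mod ?k)"
    moreover have "(?k - i) mod ?k < ?k" "(?k - j) mod ?k < ?k" using ij by (auto intro!: mod_less_divisor)
    ultimately have "(?k - i) mod ?k = (?k - j) mod ?k" using assms by (simp add: nth_eq_iff_index_eq)
    thus "i = j" using rev_index_inj ij by auto
  qed
  thus ?thesis unfolding rev_cycle_def by (simp add: distinct_map)
qed

lemma sum_Pow_prod:
  fixes g :: "'x \<Rightarrow> 'c :: comm_semiring_1"
  assumes "finite S"
  shows "(\<Sum>T\<in>Pow S. \<Prod>x\<in>T. g x) = (\<Prod>x\<in>S. g x + 1)"
  using prod_add[OF assms, of g "\<lambda>_. 1"] by simp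

lemma doubleton_eq_left: "{a, b} = {a, c} \<Longrightarrow> b = c"
  by (auto simp: doubleton_eq_iff)

lemma sum_if_conj:
  "finite P \<Longrightarrow> (\<Sum>p\<in>P. if Q \<and> R p then g p else 0) = (if Q then \<Sum>p\<in>{p\<in>P. R p}. g p else 0)"
  by (simp add: sum.inter_filter)

lemma prod_if_all:
  fixes g :: "'x \<Rightarrow> 'c :: semidom"
  assumes "finite S"
  shows "(\<Prod>u\<in>S. if P u then g u else 0) = (if \<forall>u\<in>S. P u then \<Prod>u\<in>S. g u else 0)"
proof (cases "\<forall>u\<in>S. P u")
  case True thus ?thesis by (simp cong: prod.cong)
next
  case False
  then obtain u where "u \<in> S" "\<not> P u" by blast
  thus ?thesis using assms by (simp add: prod_zero_iff) blast
qed

section \<open>Determinants over a finite index set\<close>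

lemma det_on_cong:
  assumes "\<And>u v. u \<in> S \<Longrightarrow> v \<in> S \<Longrightarrow> m u v = m' u v"
  shows "det_on S m = det_on S m'"
  unfolding det_on_def
proof (rule sum.cong[OF refl])
  fix p assume "p \<in> {p. p permutes S}"
  hence "\<And>i. i \<in> S \<Longrightarrow> p i \<in> S" by (simp add: permutes_in_image)
  thus "of_int (sign p) * (\<Prod>i\<in>S. m i (p i)) = of_int (sign p) * (\<Prod>i\<in>S. m' i (p i))"
    by (simp add: assms cong: prod.cong)
qed

lemma det_on_uminus:
  assumes "finite S"
  shows "det_on S (\<lambda>u v. - m u v) = (-1) ^ card S * det_on S m"
  unfolding det_on_def sum_distrib_left
proof (rule sum.cong[OF refl])
  fix p
  have "(\<Prod>i\<in>S. - m i (p i)) = (\<Prod>i\<in>S. (-1::complex) * m i (p i))" by simp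
  also have "\<dots> = (\<Prod>i\<in>S. (-1::complex)) * (\<Prod>i\<in>S. m i (p i))" by (rule prod.distrib)
  finally show "of_int (sign p) * (\<Prod>i\<in>S. - m i (p i)) = (-1) ^ card S * (of_int (sign p) * (\<Prod>i\<in>S. m i (p i)))"
    by simp
qed

lemma alternating_sum_eq_0_if_not_inj:
  fixes N :: "'v \<Rightarrow> 'e \<Rightarrow> complex"
  assumes fin: "finite I" and a: "a \<in> I" and b: "b \<in> I" and ab: "a \<noteq> b" and fab: "f a = f b"
  shows "(\<Sum>p\<in>{p. p permutes I}. of_int (sign p) * (\<Prod>u\<in>I. N (p u) (f u))) = 0"
proof -
  let ?t = "Transposition.transpose a b"
  have tp: "?t permutes I" using a b by (simp add: permutes_swap_id)
  let ?g = "\<lambda>p. of_int (sign p) * (\<Prod>u\<in>I. N (p u) (f u)) :: complex"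
  have swap: "?g (p \<circ> ?t) = - ?g p" if pp: "p permutes I" for p
  proof -
    have "sign (p \<circ> ?t) = - sign p"
      using sign_compose[OF permutes_imp_permutation[OF fin pp] permutation_swap_id] ab
      by (simp add: sign_swap_id)
    moreover have "(\<Prod>u\<in>I. N ((p \<circ> ?t) u) (f u)) = (\<Prod>u\<in>I. N (p (?t u)) (f (?t u)))"
      using fab by (intro prod.cong) (auto simp: Transposition.transpose_def)
    moreover have "\<dots> = (\<Prod>u\<in>I. N (p u) (f u))"
      using prod.reindex_bij_betw[OF permutes_imp_bij[OF tp], of "\<lambda>u. N (p u) (f u)"] by simp
    ultimately show ?thesis by simp
  qed
  have "sum ?g {p. p permutes I} = sum (\<lambda>p. ?g (p \<circ> ?t)) {p. p permutes I}"
    by (rule sum_permutations_compose_right[OF tp])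
  also have "\<dots> = - sum ?g {p. p permutes I}"
    using swap by (simp add: sum_negf)
  finally show ?thesis by simp
qed

lemma det_on_gram_eq_sum_PiE:
  fixes N :: "'v \<Rightarrow> 'e \<Rightarrow> complex" and c :: "'e \<Rightarrow> complex"
  assumes "finite I" and "finite D"
  shows "det_on I (\<lambda>u v. \<Sum>e\<in>D. N u e * c e * N v e) =
    (\<Sum>f\<in>I \<rightarrow>\<^sub>E D. \<Sum>p\<in>{p. p permutes I}.
       of_int (sign p) * (\<Prod>u\<in>I. N u (f u) * c (f u) * N (p u) (f u)))"
proof -
  have "det_on I (\<lambda>u v. \<Sum>e\<in>D. N u e * c e * N v e) =
      (\<Sum>p\<in>{p. p permutes I}. of_int (sign p) *
         (\<Sum>f\<in>I \<rightarrow>\<^sub>E D. \<Prod>u\<in>I. N u (f u) * c (f u) * N (p u) (f u)))"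
    unfolding det_on_def by (intro sum.cong refl) (simp add: prod_sum_PiE assms)
  also have "\<dots> = (\<Sum>f\<in>I \<rightarrow>\<^sub>E D. \<Sum>p\<in>{p. p permutes I}.
       of_int (sign p) * (\<Prod>u\<in>I. N u (f u) * c (f u) * N (p u) (f u)))"
    by (simp add: sum_distrib_left sum.swap[of _ "{p. p permutes I}"])
  finally show ?thesis .
qed

lemma sum_PiE_eq_sum_inj_by_image:
  assumes "finite I" and "finite D"
    and "\<And>f. f \<in> I \<rightarrow>\<^sub>E D \<Longrightarrow> \<not> inj_on f I \<Longrightarrow> g f = 0"
  shows "(\<Sum>f\<in>I \<rightarrow>\<^sub>E D. g f) = (\<Sum>F\<in>Pow D. \<Sum>f\<in>{f\<in>I \<rightarrow>\<^sub>E D. inj_on f I \<and> f ` I = F}. g f)"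
proof -
  let ?Inj = "{f\<in>I \<rightarrow>\<^sub>E D. inj_on f I}"
  have fin: "finite (I \<rightarrow>\<^sub>E D)" using assms by (simp add: finite_PiE)
  have "(\<Sum>f\<in>I \<rightarrow>\<^sub>E D. g f) = (\<Sum>f\<in>?Inj. g f)"
    using assms(3) by (intro sum.mono_neutral_right fin) auto
  also have "\<dots> = (\<Sum>F\<in>(\<lambda>f. f ` I) ` ?Inj. \<Sum>f\<in>{f\<in>?Inj. f ` I = F}. g f)"
    using fin by (intro sum.image_gen) simp
  also have "\<dots> = (\<Sum>F\<in>Pow D. \<Sum>f\<in>{f\<in>?Inj. f ` I = F}. g f)"
  proof (rule sum.mono_neutral_left)
    show "\<forall>F\<in>Pow D - (\<lambda>f. f ` I) ` ?Inj. (\<Sum>f\<in>{f\<in>?Inj. f ` I = F}. g f) = 0"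
      by (auto intro!: sum.neutral)
  qed (use assms(2) in \<open>auto simp: PiE_def\<close>)
  finally show ?thesis by (simp add: conj_assoc)
qed

text \<open>Cauchy--Binet for \<open>N diag(c) N\<^sup>T\<close>, with each edge set \<open>F\<close> of size \<open>|I|\<close> contributing
  \<open>(\<Prod>\<^sub>F c) \<cdot> det(N|\<^sub>F)\<^sup>2\<close>, written as a double sum over bijections \<open>I \<rightarrow> F\<close> and permutations.\<close>

lemma det_on_gram_expansion:
  fixes N :: "'v \<Rightarrow> 'e \<Rightarrow> complex" and c :: "'e \<Rightarrow> complex"
  assumes fI: "finite I" and fD: "finite D"
  shows "det_on I (\<lambda>u v. \<Sum>e\<in>D. N u e * c e * N v e) =
    (\<Sum>F\<in>Pow D. (\<Prod>e\<in>F. c e) *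
       (\<Sum>f\<in>{f\<in>I \<rightarrow>\<^sub>E D. inj_on f I \<and> f ` I = F}.
          \<Sum>p\<in>{p. p permutes I}. of_int (sign p) * (\<Prod>u\<in>I. N u (f u) * N (p u) (f u))))"
proof -
  let ?alt = "\<lambda>f. \<Sum>p\<in>{p. p permutes I}. of_int (sign p) * (\<Prod>u\<in>I. N u (f u) * N (p u) (f u))"
  have factor: "(\<Sum>p\<in>{p. p permutes I}. of_int (sign p) * (\<Prod>u\<in>I. N u (f u) * c (f u) * N (p u) (f u)))
      = (\<Prod>u\<in>I. N u (f u) * c (f u)) * (\<Sum>p\<in>{p. p permutes I}. of_int (sign p) * (\<Prod>u\<in>I. N (p u) (f u)))"
    for f by (simp add: sum_distrib_left prod.distrib mult_ac)
  have noninj: "(\<Prod>u\<in>I. N u (f u) * c (f u)) * (\<Sum>p\<in>{p. p permutes I}. of_int (sign p) * (\<Prod>u\<in>I. N (p u) (f u))) = 0"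
    if "\<not> inj_on f I" for f
    using that alternating_sum_eq_0_if_not_inj[OF fI] unfolding inj_on_def by fastforce
  have bij: "(\<Prod>u\<in>I. N u (f u) * c (f u) * N (p u) (f u)) = (\<Prod>e\<in>F. c e) * (\<Prod>u\<in>I. N u (f u) * N (p u) (f u))"
    if "inj_on f I" "f ` I = F" for f F p
    using that prod.reindex[of f I c] by (simp add: prod.distrib[symmetric] mult_ac)
  have bij_sum: "(\<Sum>p\<in>{p. p permutes I}. of_int (sign p) * (\<Prod>u\<in>I. N u (f u) * c (f u) * N (p u) (f u)))
      = (\<Prod>e\<in>F. c e) * ?alt f" if "inj_on f I" "f ` I = F" for f F
    unfolding sum_distrib_left bij[OF that] by (simp add: mult_ac)
  have "det_on I (\<lambda>u v. \<Sum>e\<in>D. N u e * c e * N v e) =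
    (\<Sum>F\<in>Pow D. \<Sum>f\<in>{f\<in>I \<rightarrow>\<^sub>E D. inj_on f I \<and> f ` I = F}. \<Sum>p\<in>{p. p permutes I}.
       of_int (sign p) * (\<Prod>u\<in>I. N u (f u) * c (f u) * N (p u) (f u)))"
    unfolding det_on_gram_eq_sum_PiE[OF fI fD] factor
    by (rule sum_PiE_eq_sum_inj_by_image[OF fI fD noninj])
  also have "\<dots> = (\<Sum>F\<in>Pow D. \<Sum>f\<in>{f\<in>I \<rightarrow>\<^sub>E D. inj_on f I \<and> f ` I = F}. (\<Prod>e\<in>F. c e) * ?alt f)"
    by (intro sum.cong refl) (simp add: bij_sum)
  finally show ?thesis by (simp add: sum_distrib_left)
qed

section \<open>The graph with boundary and its incidence matrices\<close>

locale boundary_graph =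
  fixes X dX :: "'v set" and A :: "'a set" and og tm :: "'a \<Rightarrow> 'v" and rv :: "'a \<Rightarrow> 'a"
  assumes digraph: "sym_digraph X A og tm rv" and boundary_subset: "dX \<subseteq> X"
begin

abbreviation "I \<equiv> X - dX"
abbreviation "D \<equiv> dedges X dX A rv"

lemma finite_X: "finite X" and finite_A: "finite A"
  using digraph by (auto simp: sym_digraph_def)

lemma arc_props: "a \<in> A \<Longrightarrow> og a \<in> X \<and> tm a \<in> X \<and> rv a \<in> A \<and> og (rv a) = tm a \<and> tm (rv a) = og a
            \<and> rv (rv a) = a \<and> og a \<noteq> tm a"
  using digraph by (auto simp: sym_digraph_def)

lemma finite_I: "finite I" using finite_X by simp

lemma finite_D: "finite D"
  unfolding dedges_def using finite_A finite_X by simp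

lemma og_image_edge_of: "a \<in> A \<Longrightarrow> og ` edge_of rv a = {og a, tm a}"
  using arc_props[of a] by (simp add: edge_of_def)

lemma dends_edge_of: "a \<in> A \<Longrightarrow> dends og (Ed (edge_of rv a)) = {og a, tm a}"
  by (simp add: og_image_edge_of)

lemma dedges_cases:
  assumes "e \<in> D"
  obtains (Ed) a where "a \<in> A" "e = Ed (edge_of rv a)" | (Lp) v where "v \<in> I" "e = Lp v"
  using assms unfolding dedges_def by blast

lemma dends_subset_X: "e \<in> D \<Longrightarrow> dends og e \<subseteq> X"
  by (erule dedges_cases) (auto simp: og_image_edge_of arc_props)

lemma dends_doubleton:
  assumes "e \<in> D" "x \<in> dends og e"
  shows "\<exists>y. dends og e = {x, y}"
  using assms(1) by (cases rule: dedges_cases) (use assms(2) in \<open>auto simp: og_image_edge_of\<close>)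

definition arc_rep :: "'a set \<Rightarrow> 'a" where
  "arc_rep E = (SOME a. a \<in> A \<and> edge_of rv a = E)"

lemma arc_rep_edge_of:
  assumes "a \<in> A"
  shows "arc_rep (edge_of rv a) = a \<or> arc_rep (edge_of rv a) = rv a"
proof -
  have "\<exists>b. b \<in> A \<and> edge_of rv b = edge_of rv a" using assms by blast
  hence "edge_of rv (arc_rep (edge_of rv a)) = edge_of rv a"
    unfolding arc_rep_def by (rule someI_ex[THEN conjunct2])
  hence "arc_rep (edge_of rv a) \<in> edge_of rv a" unfolding edge_of_def by blast
  thus ?thesis by (simp add: edge_of_def)
qed

definition unsigned_inc :: "'v \<Rightarrow> ('v, 'a) dedge \<Rightarrow> complex" where
  "unsigned_inc u e = (if u \<in> dends og e then 1 else 0)"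

text \<open>Edges are oriented by an arbitrary representative arc; the orientation is irrelevant since
  \<open>signed_inc\<close> only ever enters through the products \<open>signed_inc u e * signed_inc v e\<close>.\<close>

definition signed_inc :: "'v \<Rightarrow> ('v, 'a) dedge \<Rightarrow> complex" where
  "signed_inc u e = (case e of
      Ed E \<Rightarrow> (if u = tm (arc_rep E) then 1 else if u = og (arc_rep E) then -1 else 0)
    | Lp v \<Rightarrow> (if u = v then 1 else 0))"

lemma unsigned_inc_mult:
  "unsigned_inc u e * unsigned_inc v e = (if u \<in> dends og e \<and> v \<in> dends og e then 1 else 0)"
  by (simp add: unsigned_inc_def)

lemma signed_inc_edge_of_mult:
  assumes "a \<in> A"
  shows "signed_inc u (Ed (edge_of rv a)) * signed_inc v (Ed (edge_of rv a)) =
     (if u \<in> {og a, tm a} \<and> v \<in> {og a, tm a} then (if u = v then 1 else -1) else 0)"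
proof -
  have "og (rv a) = tm a" "tm (rv a) = og a" "og a \<noteq> tm a" using arc_props[OF assms] by auto
  thus ?thesis using arc_rep_edge_of[OF assms] by (elim disjE) (auto simp: signed_inc_def)
qed

lemma signed_inc_mult:
  assumes "e \<in> D"
  shows "signed_inc u e * signed_inc v e =
     (if u \<in> dends og e \<and> v \<in> dends og e then (if u = v then 1 else -1) else 0)"
  using assms
proof (cases rule: dedges_cases)
  case (Ed a) thus ?thesis using signed_inc_edge_of_mult[of a u v] by (simp add: og_image_edge_of)
qed (simp add: signed_inc_def)

lemma sum_dedges:
  "(\<Sum>e\<in>D. g e) = (\<Sum>E\<in>edge_of rv ` A. g (Ed E)) + (\<Sum>x\<in>I. g (Lp x))"
proof -
  have "(\<Sum>e\<in>D. g e) = (\<Sum>e\<in>Ed ` (edge_of rv ` A). g e) + (\<Sum>e\<in>Lp ` I. g e)"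
    unfolding dedges_def by (rule sum.union_disjoint) (use finite_A finite_X in auto)
  thus ?thesis by (simp add: sum.reindex inj_on_def)
qed

text \<open>Each edge at \<open>u\<close> is counted once, through its arc pointing into \<open>u\<close>.\<close>

lemma sum_edges_at_vertex:
  assumes "\<And>E. E \<in> edge_of rv ` A \<Longrightarrow> u \<notin> og ` E \<Longrightarrow> g E = 0"
  shows "(\<Sum>E\<in>edge_of rv ` A. g E) = (\<Sum>a\<in>{a\<in>A. tm a = u}. g (edge_of rv a))"
proof -
  have inj: "inj_on (edge_of rv) {a\<in>A. tm a = u}"
    by (rule inj_onI) (auto simp: edge_of_def doubleton_eq_iff dest: arc_props)
  have img: "edge_of rv ` {a\<in>A. tm a = u} = {E\<in>edge_of rv ` A. u \<in> og ` E}"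
  proof (intro equalityI subsetI)
    fix E assume E: "E \<in> {E\<in>edge_of rv ` A. u \<in> og ` E}"
    then obtain a where a: "a \<in> A" "E = edge_of rv a" by blast
    hence "u = og a \<or> u = tm a" using E og_image_edge_of by auto
    moreover have "edge_of rv (rv a) = edge_of rv a" using arc_props[OF a(1)] by (auto simp: edge_of_def)
    ultimately show "E \<in> edge_of rv ` {a\<in>A. tm a = u}"
      using a image_eqI[of E "edge_of rv" a] image_eqI[of E "edge_of rv" "rv a"] arc_props[OF a(1)] by auto
  qed (auto simp: og_image_edge_of dest: arc_props)
  have "(\<Sum>E\<in>edge_of rv ` A. g E) = (\<Sum>E\<in>{E\<in>edge_of rv ` A. u \<in> og ` E}. g E)"
    by (rule sum.mono_neutral_right) (use finite_A assms in auto)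
  also have "\<dots> = (\<Sum>a\<in>{a\<in>A. tm a = u}. g (edge_of rv a))"
    unfolding img[symmetric] by (simp add: sum.reindex[OF inj])
  finally show ?thesis .
qed

lemma op_matrix_MV:
  "op_matrix (MV_op A og tm rv w V) u v =
     (\<Sum>a\<in>{a\<in>A. tm a = u}. (if og a = v then w (edge_of rv a) else 0)) + (if u = v then V u else 0)"
  unfolding op_matrix_def MV_op_def M_op_def by (auto intro: sum.cong)

lemma sum_loops_gram:
  fixes N :: "'v \<Rightarrow> ('v, 'a) dedge \<Rightarrow> complex"
  assumes "u \<in> I" and "\<And>y x. N y (Lp x) = (if y = x then 1 else 0)"
  shows "(\<Sum>x\<in>I. N u (Lp x) * c (Lp x) * N v (Lp x)) = (if u = v then c (Lp u) else 0)"
proof -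
  have "N u (Lp x) * c (Lp x) * N v (Lp x) = (if x = u then (if u = v then c (Lp u) else 0) else 0)" for x
    using assms(2)[of u x] assms(2)[of v x] by auto
  thus ?thesis using assms(1) finite_I by simp
qed

lemma sum_no_self_arc: "(\<Sum>a\<in>{a\<in>A. tm a = u}. (if og a = u then g a else 0)) = 0"
  by (rule sum.neutral) (auto dest: arc_props)

text \<open>The two Gram factorisations \<open>\<chi>\<M>\<^sub>V\<chi>\<^sup>* - z = N\<^sub>q W N\<^sub>q\<^sup>T\<close> and
  \<open>-(\<chi>\<M>\<^sub>-\<^sub>V\<chi>\<^sup>* + z) = N\<^sub>s W N\<^sub>s\<^sup>T\<close>, with the weights \<open>W = wQ\<close> of the deformed graph; the
  self-loop weight \<open>-z + V - \<pi>\<close> absorbs both the potential and the degree term.\<close>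

lemma gram_unsigned_inc:
  assumes u: "u \<in> I" and v: "v \<in> I"
  shows "(\<Sum>e\<in>D. unsigned_inc u e * wQ A tm rv w V z e * unsigned_inc v e) =
     op_matrix (MV_op A og tm rv w V) u v - (if u = v then z else 0)"
proof -
  let ?c = "wQ A tm rv w V z"
  have "(\<Sum>E\<in>edge_of rv ` A. unsigned_inc u (Ed E) * ?c (Ed E) * unsigned_inc v (Ed E)) =
      (\<Sum>a\<in>{a\<in>A. tm a = u}. unsigned_inc u (Ed (edge_of rv a)) * ?c (Ed (edge_of rv a)) * unsigned_inc v (Ed (edge_of rv a)))"
    by (rule sum_edges_at_vertex) (simp add: unsigned_inc_def)
  also have "\<dots> = (\<Sum>a\<in>{a\<in>A. tm a = u}. (if og a = v \<or> v = u then w (edge_of rv a) else 0))"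
    by (intro sum.cong refl) (auto simp: unsigned_inc_def og_image_edge_of)
  finally have edges: "(\<Sum>E\<in>edge_of rv ` A. unsigned_inc u (Ed E) * ?c (Ed E) * unsigned_inc v (Ed E)) = \<dots>" .
  have loops: "(\<Sum>x\<in>I. unsigned_inc u (Lp x) * ?c (Lp x) * unsigned_inc v (Lp x)) =
      (if u = v then ?c (Lp u) else 0)"
    by (rule sum_loops_gram[OF u]) (simp add: unsigned_inc_def)
  show ?thesis
    unfolding sum_dedges edges loops op_matrix_MV
    by (cases "u = v") (simp_all add: sum_no_self_arc piw_def)
qed

lemma gram_signed_inc:
  assumes u: "u \<in> I" and v: "v \<in> I"
  shows "(\<Sum>e\<in>D. signed_inc u e * wQ A tm rv w V z e * signed_inc v e) =
     - (op_matrix (MV_op A og tm rv w (\<lambda>x. - V x)) u v + (if u = v then z else 0))"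
proof -
  let ?c = "wQ A tm rv w V z"
  have edge_mult: "signed_inc u (Ed (edge_of rv a)) * signed_inc v (Ed (edge_of rv a)) =
      (if v = u then 1 else if og a = v then -1 else 0)" if "a \<in> A" "tm a = u" for a
    using signed_inc_edge_of_mult[of a u v] that arc_props[of a] by auto
  have "(\<Sum>E\<in>edge_of rv ` A. signed_inc u (Ed E) * ?c (Ed E) * signed_inc v (Ed E)) =
      (\<Sum>a\<in>{a\<in>A. tm a = u}. signed_inc u (Ed (edge_of rv a)) * ?c (Ed (edge_of rv a)) * signed_inc v (Ed (edge_of rv a)))"
  proof (rule sum_edges_at_vertex)
    fix E assume "E \<in> edge_of rv ` A" "u \<notin> og ` E"
    then obtain a where "a \<in> A" "E = edge_of rv a" "u \<notin> {og a, tm a}" using og_image_edge_of by blast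
    thus "signed_inc u (Ed E) * ?c (Ed E) * signed_inc v (Ed E) = 0"
      using signed_inc_edge_of_mult[of a u u] by (simp add: mult.commute mult.left_commute)
  qed
  also have "\<dots> = (\<Sum>a\<in>{a\<in>A. tm a = u}.
      (if v = u then w (edge_of rv a) else if og a = v then - w (edge_of rv a) else 0))"
    by (intro sum.cong refl) (simp add: mult.commute mult.left_commute edge_mult)
  finally have edges: "(\<Sum>E\<in>edge_of rv ` A. signed_inc u (Ed E) * ?c (Ed E) * signed_inc v (Ed E)) = \<dots>" .
  have loops: "(\<Sum>x\<in>I. signed_inc u (Lp x) * ?c (Lp x) * signed_inc v (Lp x)) =
      (if u = v then ?c (Lp u) else 0)"
    by (rule sum_loops_gram[OF u]) (simp add: signed_inc_def)
  have "(\<Sum>a\<in>{a\<in>A. tm a = u}. (if og a = v then - w (edge_of rv a) else 0)) =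
      - (\<Sum>a\<in>{a\<in>A. tm a = u}. (if og a = v then w (edge_of rv a) else 0))"
    by (simp add: sum_negf[symmetric] if_distrib cong: if_cong)
  thus ?thesis
    unfolding sum_dedges edges loops op_matrix_MV
    by (cases "u = v") (simp_all add: sum_no_self_arc piw_def)
qed
end

section \<open>Cycles and connected components\<close>

context boundary_graph begin

abbreviation adj :: "('v, 'a) dedge set \<Rightarrow> 'v \<Rightarrow> 'v \<Rightarrow> bool" where
  "adj F \<equiv> (\<lambda>x y. \<exists>e\<in>F. dends og e = {x, y})"

definition cycle_walk :: "('v, 'a) dedge set \<Rightarrow> ('v, 'a) dedge set \<Rightarrow> 'v list \<Rightarrow> ('v, 'a) dedge list \<Rightarrow> bool" where
  "cycle_walk F C vs es \<longleftrightarrow> C \<subseteq> F \<and> length vs \<ge> 1 \<and> length es = length vs \<and>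
      distinct vs \<and> distinct es \<and> set es = C \<and>
      (\<forall>i<length vs. dends og (es ! i) = {vs ! i, vs ! ((i + 1) mod length vs)})"

lemma is_cycle_iff_walk: "is_cycle og F C \<longleftrightarrow> (\<exists>vs es. cycle_walk F C vs es)"
  unfolding is_cycle_def cycle_walk_def by blast

definition cverts :: "('v, 'a) dedge set \<Rightarrow> 'v set" where
  "cverts C = \<Union>(dends og ` C)"

lemma cycle_walk_card: "cycle_walk F C vs es \<Longrightarrow> card C = length vs"
  unfolding cycle_walk_def using distinct_card by metis

lemma cycle_walk_cverts: assumes "cycle_walk F C vs es" shows "cverts C = set vs"
proof
  show "cverts C \<subseteq> set vs"
  proof
    fix x assume "x \<in> cverts C"
    then obtain e where e: "e \<in> C" "x \<in> dends og e" unfolding cverts_def by blast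
    then obtain i where i: "i < length es" "es ! i = e" using assms unfolding cycle_walk_def by (metis in_set_conv_nth)
    hence "x \<in> {vs ! i, vs ! ((i + 1) mod length vs)}" using assms e unfolding cycle_walk_def by auto
    moreover have lp: "length vs > 0" using assms unfolding cycle_walk_def by auto
    moreover have "i < length vs" "(i + 1) mod length vs < length vs" using assms i lp unfolding cycle_walk_def by auto
    ultimately show "x \<in> set vs" by auto
  qed
  show "set vs \<subseteq> cverts C"
  proof
    fix x assume "x \<in> set vs"
    then obtain i where i: "i < length vs" "vs ! i = x" by (metis in_set_conv_nth)
    hence "es ! i \<in> C" "x \<in> dends og (es ! i)" using assms unfolding cycle_walk_def by auto
    thus "x \<in> cverts C" unfolding cverts_def by blast
  qed
qed

lemma cverts_nonempty: assumes "is_cycle og F C" shows "cverts C \<noteq> {}"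
proof -
  obtain vs es where r: "cycle_walk F C vs es" using assms is_cycle_iff_walk by blast
  hence "vs \<noteq> []" unfolding cycle_walk_def by auto
  thus ?thesis using cycle_walk_cverts[OF r] by simp
qed

lemma is_cycle_card_pos: "is_cycle og F C \<Longrightarrow> 1 \<le> card C"
  using cycle_walk_card unfolding is_cycle_iff_walk cycle_walk_def by metis

lemma cverts_subset_comp: "C \<subseteq> comp_edges og F W \<Longrightarrow> cverts C \<subseteq> W"
  unfolding comp_edges_def cverts_def by blast

lemma cycle_walk_mono: "cycle_walk F C vs es \<Longrightarrow> C \<subseteq> G \<Longrightarrow> cycle_walk G C vs es"
  unfolding cycle_walk_def by blast

lemma is_cycle_mono: "is_cycle og F C \<Longrightarrow> C \<subseteq> G \<Longrightarrow> is_cycle og G C"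
  using cycle_walk_mono is_cycle_iff_walk by metis

lemma is_cycle_subset: "is_cycle og F C \<Longrightarrow> C \<subseteq> F"
  unfolding is_cycle_def by blast

lemma cycle_walk_reach_nth:
  assumes "cycle_walk F C vs es" "i < length vs"
  shows "(adj C)\<^sup>*\<^sup>* (vs ! 0) (vs ! i)"
  using assms(2)
proof (induction i)
  case 0 thus ?case by simp
next
  case (Suc i)
  hence "i < length vs" by simp
  hence "dends og (es ! i) = {vs ! i, vs ! Suc i}" "es ! i \<in> C"
    using assms(1) Suc.prems unfolding cycle_walk_def by (auto simp: nth_mem)
  hence "adj C (vs ! i) (vs ! Suc i)" by blast
  moreover have "(adj C)\<^sup>*\<^sup>* (vs ! 0) (vs ! i)" using Suc by simp
  ultimately show ?case by (simp add: rtranclp.rtrancl_into_rtrancl)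
qed

lemma cycle_walk_rev_cycle:
  assumes r: "cycle_walk F C vs es"
  shows "cycle_walk F C (rev_cycle vs) (rev es)"
proof -
  let ?k = "length vs"
  have k: "?k \<ge> 1" "length es = ?k" using r unfolding cycle_walk_def by auto
  have len: "length (rev_cycle vs) = ?k" unfolding rev_cycle_def by simp
  have nth: "\<And>i. i < ?k \<Longrightarrow> rev_cycle vs ! i = vs ! ((?k - i) mod ?k)" unfolding rev_cycle_def by simp
  have dist: "distinct (rev_cycle vs)" using r unfolding cycle_walk_def by (simp add: distinct_rev_cycle)
  have ends: "dends og (rev es ! i) = {rev_cycle vs ! i, rev_cycle vs ! ((i + 1) mod length (rev_cycle vs))}" if i: "i < ?k" for i
  proof -
    have "rev es ! i = es ! (?k - 1 - i)" using i k by (simp add: rev_nth)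
    moreover have "?k - 1 - i < ?k" using i by simp
    ultimately have e: "dends og (rev es ! i) = {vs ! (?k - 1 - i), vs ! ((?k - 1 - i + 1) mod ?k)}"
      using r unfolding cycle_walk_def by simp
    have a: "(?k - 1 - i + 1) mod ?k = (?k - i) mod ?k" using i by (simp add: Suc_diff_Suc)
    have b: "rev_cycle vs ! ((i + 1) mod ?k) = vs ! (?k - 1 - i)"
    proof (cases "i + 1 < ?k")
      case True thus ?thesis using nth by simp
    next
      case False hence "i + 1 = ?k" using i by simp
      have "vs \<noteq> []" using k by auto
      hence "rev_cycle vs ! 0 = vs ! 0" using nth[of 0] by simp
      thus ?thesis using \<open>i + 1 = ?k\<close> by simp
    qed
    show ?thesis using e a b nth[OF i] len by (simp add: insert_commute)
  qed
  show ?thesis using r dist ends len k unfolding cycle_walk_def by auto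
qed

lemma adj_sym: "adj F x y \<Longrightarrow> adj F y x"
  by (auto simp: insert_commute)

lemma rtranclp_adj_sym: "(adj F)\<^sup>*\<^sup>* x y \<Longrightarrow> (adj F)\<^sup>*\<^sup>* y x"
proof (induction rule: rtranclp_induct)
  case base thus ?case by simp
next
  case (step y z)
  hence "adj F z y" using adj_sym by blast
  thus ?case using step(3) by (rule converse_rtranclp_into_rtranclp)
qed

lemma rtranclp_adj_mono: "(adj F)\<^sup>*\<^sup>* x y \<Longrightarrow> F \<subseteq> G \<Longrightarrow> (adj G)\<^sup>*\<^sup>* x y"
  by (erule rtranclp_mono[THEN predicate2D, rotated]) blast

lemma cycle_walk_reach:
  assumes "cycle_walk F C vs es" "x \<in> set vs" "y \<in> set vs"
  shows "(adj C)\<^sup>*\<^sup>* x y"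
proof -
  obtain i j where "i < length vs" "vs ! i = x" "j < length vs" "vs ! j = y" using assms by (metis in_set_conv_nth)
  hence "(adj C)\<^sup>*\<^sup>* (vs ! 0) x" "(adj C)\<^sup>*\<^sup>* (vs ! 0) y" using cycle_walk_reach_nth[OF assms(1)] by auto
  thus ?thesis using rtranclp_trans[OF rtranclp_adj_sym] by blast
qed

lemma is_cycle_loop: "Lp v \<in> F \<Longrightarrow> is_cycle og F {Lp v}"
  unfolding is_cycle_iff_walk cycle_walk_def by (rule exI[of _ "[v]"], rule exI[of _ "[Lp v]"]) auto

lemma comp_vertices_self: "u \<in> X \<Longrightarrow> u \<in> comp_vertices X og F u"
  unfolding comp_vertices_def by simp

lemma comp_vertices_eq:
  assumes "F \<subseteq> D" "v \<in> comp_vertices X og F u"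
  shows "comp_vertices X og F v = comp_vertices X og F u"
proof -
  have uv: "(adj F)\<^sup>*\<^sup>* u v" using assms unfolding comp_vertices_def by blast
  show ?thesis unfolding comp_vertices_def
  proof (rule Collect_cong)
    fix w show "(w \<in> X \<and> (adj F)\<^sup>*\<^sup>* v w) = (w \<in> X \<and> (adj F)\<^sup>*\<^sup>* u w)"
      using rtranclp_trans[OF uv, of w] rtranclp_trans[OF rtranclp_adj_sym[OF uv], of w] by blast
  qed
qed

lemma cycle_in_comp:
  assumes FD: "F \<subseteq> D" and cy: "is_cycle og F C" and v: "v \<in> cverts C"
  shows "cverts C \<subseteq> comp_vertices X og F v" "C \<subseteq> comp_edges og F (comp_vertices X og F v)"
proof -
  obtain vs es where r: "cycle_walk F C vs es" using cy is_cycle_iff_walk by blast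
  have CF: "C \<subseteq> F" using r unfolding cycle_walk_def by blast
  have VX: "cverts C \<subseteq> X" using CF FD dends_subset_X unfolding cverts_def by blast
  have conn: "(adj F)\<^sup>*\<^sup>* v x" if x: "x \<in> cverts C" for x
  proof -
    have "(adj C)\<^sup>*\<^sup>* v x" using cycle_walk_reach[OF r] cycle_walk_cverts[OF r] v x by simp
    thus ?thesis using rtranclp_adj_mono CF by blast
  qed
  show 1: "cverts C \<subseteq> comp_vertices X og F v" using conn VX unfolding comp_vertices_def by blast
  show "C \<subseteq> comp_edges og F (comp_vertices X og F v)"
    unfolding comp_edges_def using CF 1 unfolding cverts_def by blast
qed

lemma is_cycle_comp_edges_iff:
  "is_cycle og (comp_edges og F W) C \<longleftrightarrow> is_cycle og F C \<and> C \<subseteq> comp_edges og F W"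
  using is_cycle_mono is_cycle_subset unfolding comp_edges_def by blast

lemma comp_in_components: "u \<in> X \<Longrightarrow> comp_vertices X og F u \<in> components X og F"
  unfolding components_def by blast

lemma HQ_subset: "F \<in> HQ X dX A og rv \<Longrightarrow> F \<subseteq> D"
  unfolding HQ_def by blast

lemma HQ_unique_cycle:
  assumes H: "F \<in> HQ X dX A og rv" and cy: "is_cycle og F C" and v: "v \<in> cverts C"
  shows "cycles og (comp_edges og F (comp_vertices X og F v)) = {C}"
    "comp_vertices X og F v \<inter> dX = {}"
proof -
  have FD: "F \<subseteq> D" using H HQ_subset by blast
  have vX: "v \<in> X" using v cy is_cycle_subset FD dends_subset_X unfolding cverts_def by blast
  let ?W = "comp_vertices X og F v"
  have W: "?W \<in> components X og F" using comp_in_components vX by blast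
  have Cin: "C \<in> cycles og (comp_edges og F ?W)"
    unfolding cycles_def using is_cycle_comp_edges_iff cycle_in_comp[OF FD cy v] cy by blast
  have "(card (?W \<inter> dX) = 1 \<and> cycles og (comp_edges og F ?W) = {}) \<or>
        (?W \<inter> dX = {} \<and> (\<exists>C. cycles og (comp_edges og F ?W) = {C} \<and> odd (card C)))"
    using H W unfolding HQ_def by blast
  thus "cycles og (comp_edges og F ?W) = {C}" "?W \<inter> dX = {}" using Cin by auto
qed

lemma HQ_odd:
  assumes H: "F \<in> HQ X dX A og rv" and cy: "is_cycle og F C"
  shows "odd (card C)"
proof -
  have FD: "F \<subseteq> D" using H HQ_subset by blast
  obtain vs es where r: "cycle_walk F C vs es" using cy is_cycle_iff_walk by blast
  have "vs ! 0 \<in> set vs" using r unfolding cycle_walk_def by (auto intro!: nth_mem)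
  hence v: "vs ! 0 \<in> cverts C" using cycle_walk_cverts[OF r] by simp
  hence vX: "vs ! 0 \<in> X" using cy is_cycle_subset FD dends_subset_X unfolding cverts_def by blast
  let ?W = "comp_vertices X og F (vs ! 0)"
  have W: "?W \<in> components X og F" using comp_in_components vX by blast
  have cyc: "cycles og (comp_edges og F ?W) = {C}" using HQ_unique_cycle[OF H cy v] by blast
  have "(card (?W \<inter> dX) = 1 \<and> cycles og (comp_edges og F ?W) = {}) \<or>
        (?W \<inter> dX = {} \<and> (\<exists>C. cycles og (comp_edges og F ?W) = {C} \<and> odd (card C)))"
    using H W unfolding HQ_def by blast
  thus ?thesis using cyc by auto
qed

lemma HQ_cycles_disjoint:
  assumes H: "F \<in> HQ X dX A og rv" and cy: "is_cycle og F C" and cy': "is_cycle og F C'"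
    and v: "v \<in> cverts C" "v \<in> cverts C'"
  shows "C = C'"
  using HQ_unique_cycle(1)[OF H cy v(1)] HQ_unique_cycle(1)[OF H cy' v(2)] by blast

lemma HQ_cverts_interior:
  assumes H: "F \<in> HQ X dX A og rv" and cy: "is_cycle og F C"
  shows "cverts C \<subseteq> I"
proof
  fix v assume v: "v \<in> cverts C"
  have FD: "F \<subseteq> D" using H HQ_subset by blast
  have vX: "v \<in> X" using v cy is_cycle_subset FD dends_subset_X unfolding cverts_def by blast
  have "v \<in> comp_vertices X og F v" using comp_vertices_self vX by blast
  thus "v \<in> I" using HQ_unique_cycle(2)[OF H cy v] vX by blast
qed


definition is_path :: "('v, 'a) dedge set \<Rightarrow> 'v list \<Rightarrow> ('v, 'a) dedge list \<Rightarrow> bool" where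
  "is_path G vs es \<longleftrightarrow> vs \<noteq> [] \<and> length es + 1 = length vs \<and> distinct vs \<and> distinct es \<and>
     set es \<subseteq> G \<and> (\<forall>i<length es. dends og (es ! i) = {vs ! i, vs ! Suc i})"

lemma is_path_drop:
  assumes p: "is_path G vs es" and j: "j < length vs"
  shows "is_path G (drop j vs) (drop j es)"
  using p j unfolding is_path_def
proof (intro conjI allI impI)
  show "set (drop j es) \<subseteq> G" using p set_drop_subset unfolding is_path_def by fastforce
qed (auto simp: distinct_drop)

lemma is_path_Cons:
  assumes p: "is_path G vs es" and x: "x \<notin> set vs" and e: "e \<in> G" "dends og e = {x, hd vs}"
  shows "is_path G (x # vs) (e # es)"
proof -
  have vne: "vs \<noteq> []" and len: "length es + 1 = length vs"
    and nth: "\<And>i. i < length es \<Longrightarrow> dends og (es ! i) = {vs ! i, vs ! Suc i}"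
    using p unfolding is_path_def by auto
  have "e \<notin> set es"
  proof
    assume "e \<in> set es"
    then obtain i where "i < length es" "es ! i = e" by (auto simp: in_set_conv_nth)
    hence "x \<in> {vs ! i, vs ! Suc i}" "i < length vs" "Suc i < length vs" using nth e len by auto
    thus False using x nth_mem[of i vs] nth_mem[of "Suc i" vs] by auto
  qed
  moreover have "dends og ((e # es) ! i) = {(x # vs) ! i, (x # vs) ! Suc i}" if "i < length (e # es)" for i
    using that e vne nth by (cases i) (auto simp: hd_conv_nth)
  ultimately show ?thesis using p x e unfolding is_path_def by auto
qed

lemma path_exists:
  assumes "(adj G)\<^sup>*\<^sup>* x y"
  shows "\<exists>vs es. is_path G vs es \<and> hd vs = x \<and> last vs = y"
  using assms
proof (induction rule: converse_rtranclp_induct)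
  case base
  have "is_path G [y] []" unfolding is_path_def by simp
  thus ?case by force
next
  case (step x x1)
  obtain vs es where p: "is_path G vs es" "hd vs = x1" "last vs = y" using step.IH by blast
  obtain e where e: "e \<in> G" "dends og e = {x, x1}" using step.hyps(1) by blast
  show ?case
  proof (cases "x \<in> set vs")
    case True
    then obtain j where j: "j < length vs" "vs ! j = x" by (auto simp: in_set_conv_nth)
    hence "hd (drop j vs) = x" "last (drop j vs) = y" using p(3) by (simp_all add: hd_drop_conv_nth)
    thus ?thesis using is_path_drop[OF p(1) j(1)] by blast
  next
    case False
    have "vs \<noteq> []" using p(1) unfolding is_path_def by simp
    hence "is_path G (x # vs) (e # es)" "last (x # vs) = y" using is_path_Cons[OF p(1) False e(1)] e(2) p by simp_all
    thus ?thesis by force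
  qed
qed

lemma cycle_through_edge:
  assumes e: "e \<in> F" "dends og e = {x, y}" and xy: "x \<noteq> y" and conn: "(adj (F - {e}))\<^sup>*\<^sup>* x y"
  shows "\<exists>C. is_cycle og F C \<and> e \<in> C"
proof -
  obtain vs es where p: "is_path (F - {e}) vs es" "hd vs = x" "last vs = y" using path_exists[OF conn] by blast
  have vne: "vs \<noteq> []" and len: "length es + 1 = length vs" and dv: "distinct vs" and de: "distinct es"
    and sG: "set es \<subseteq> F - {e}" and nth: "\<And>i. i < length es \<Longrightarrow> dends og (es ! i) = {vs ! i, vs ! Suc i}"
    using p(1) unfolding is_path_def by auto
  let ?n = "length vs"
  have h0: "vs ! 0 = x" using p(2) vne by (simp add: hd_conv_nth)
  have hl: "vs ! (?n - 1) = y" using p(3) vne by (simp add: last_conv_nth)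
  have n2: "?n \<ge> 2"
  proof (rule ccontr)
    assume "\<not> ?n \<ge> 2" moreover have "?n \<noteq> 0" using vne by simp
    ultimately have "?n = 1" by linarith
    thus False using h0 hl xy by simp
  qed
  let ?es = "es @ [e]"
  have "cycle_walk F (set ?es) vs ?es"
    unfolding cycle_walk_def
  proof (intro conjI allI impI)
    show "set ?es \<subseteq> F" using sG e by auto
    show "length vs \<ge> 1" using n2 by simp
    show "length ?es = length vs" using len by simp
    show "distinct vs" by (rule dv)
    show "distinct ?es" using de sG by auto
    show "set ?es = set ?es" ..
    fix i assume i: "i < length vs"
    show "dends og (?es ! i) = {vs ! i, vs ! ((i + 1) mod length vs)}"
    proof (cases "i < length es")
      case True
      hence "(i + 1) mod ?n = Suc i" using len by simp
      thus ?thesis using nth[OF True] True by (simp add: nth_append)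
    next
      case False
      hence ii: "i = length es" using i len by simp
      hence "(i + 1) mod ?n = 0" using len by simp
      moreover have "?n - 1 = i" using ii len by simp
      hence "vs ! i = y" using hl by simp
      ultimately show ?thesis using ii e h0 by (simp add: nth_append insert_commute)
    qed
  qed
  thus ?thesis using is_cycle_iff_walk by auto
qed

end

section \<open>Edge assignments and the partner map\<close>

context boundary_graph begin

text \<open>An assignment of \<open>F\<close> picks at every interior vertex \<open>u\<close> an edge \<open>f u\<close> incident to it, using
  every edge of \<open>F\<close> exactly once.  Then \<open>F\<close> is the functional graph of \<open>partner f\<close>, which maps \<open>u\<close>
  to the other end of \<open>f u\<close> and fixes the boundary.\<close>

definition assign :: "('v, 'a) dedge set \<Rightarrow> ('v \<Rightarrow> ('v, 'a) dedge) \<Rightarrow> bool" where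
  "assign F f \<longleftrightarrow> f \<in> I \<rightarrow>\<^sub>E F \<and> inj_on f I \<and> f ` I = F \<and> (\<forall>u\<in>I. u \<in> dends og (f u))"

definition other_end :: "('v, 'a) dedge \<Rightarrow> 'v \<Rightarrow> 'v" where
  "other_end e u = (SOME y. dends og e = {u, y})"

lemma other_end: assumes "e \<in> D" "u \<in> dends og e" shows "dends og e = {u, other_end e u}"
proof -
  obtain y where "dends og e = {u, y}" using dends_doubleton[OF assms] by blast
  thus ?thesis unfolding other_end_def by (rule someI)
qed

definition partner :: "('v \<Rightarrow> ('v, 'a) dedge) \<Rightarrow> 'v \<Rightarrow> 'v" where
  "partner f v = (if v \<in> I then other_end (f v) v else v)"

definition long_cycles :: "('v, 'a) dedge set \<Rightarrow> ('v, 'a) dedge set set" where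
  "long_cycles F = {C. is_cycle og F C \<and> 2 \<le> card C}"

end

locale assignment = boundary_graph X dX A og tm rv
  for X dX :: "'v set" and A :: "'a set" and og tm :: "'a \<Rightarrow> 'v" and rv :: "'a \<Rightarrow> 'a" +
  fixes F :: "('v, 'a) dedge set" and f :: "'v \<Rightarrow> ('v, 'a) dedge"
  assumes FD: "F \<subseteq> D" and assign_f: "assign F f"
begin

abbreviation "H \<equiv> partner f"

lemma assign_in: "u \<in> I \<Longrightarrow> f u \<in> F" using assign_f unfolding assign_def by blast
lemma assign_inj: "inj_on f I" using assign_f unfolding assign_def by blast
lemma assign_image: "f ` I = F" using assign_f unfolding assign_def by blast
lemma assign_incident: "u \<in> I \<Longrightarrow> u \<in> dends og (f u)" using assign_f unfolding assign_def by blast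
lemma assign_PiE: "f \<in> I \<rightarrow>\<^sub>E F" using assign_f unfolding assign_def by blast

lemma dends_assign: assumes u: "u \<in> I" shows "dends og (f u) = {u, H u}"
proof -
  have "dends og (f u) = {u, other_end (f u) u}" by (rule other_end) (use assign_in assign_incident FD u in auto)
  thus ?thesis using u unfolding partner_def by simp
qed

lemma partner_boundary: "v \<notin> I \<Longrightarrow> H v = v" unfolding partner_def by auto

lemma partner_in_X: "H v \<in> X" if "v \<in> X"
proof (cases "v \<in> I")
  case True
  have "H v \<in> dends og (f v)" using dends_assign True by simp
  thus ?thesis using dends_subset_X assign_in True FD by blast
next
  case False hence "H v = v" by (rule partner_boundary)
  thus ?thesis using that by simp
qed

lemma partner_pow_in_X: "v \<in> X \<Longrightarrow> (H ^^ n) v \<in> X"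
  by (induction n) (auto simp: partner_in_X)

lemma partner_pow_boundary: "v \<notin> I \<Longrightarrow> (H ^^ n) v = v"
  by (induction n) (auto simp: partner_boundary)

lemma adj_partner: "u \<in> I \<Longrightarrow> adj F u (H u)"
  using dends_assign assign_in by blast

definition owner :: "('v, 'a) dedge \<Rightarrow> 'v" where "owner e = inv_into I f e"

lemma owner: "e \<in> F \<Longrightarrow> owner e \<in> I \<and> f (owner e) = e"
  unfolding owner_def using assign_image inv_into_into[of e f I] f_inv_into_f[of e f I] by auto

lemma owner_assign: "u \<in> I \<Longrightarrow> owner (f u) = u"
  unfolding owner_def using assign_inj by simp

lemma owner_incident: assumes "e \<in> F" shows "owner e \<in> dends og e"
proof -
  have "owner e \<in> I" "f (owner e) = e" using owner[OF assms] by auto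
  thus ?thesis using assign_incident[of "owner e"] by simp
qed

definition fwd_walk :: "('v, 'a) dedge set \<Rightarrow> 'v list \<Rightarrow> ('v, 'a) dedge list \<Rightarrow> bool" where
  "fwd_walk C vs es \<longleftrightarrow> cycle_walk F C vs es \<and> set vs \<subseteq> I \<and> (\<forall>i<length vs. f (vs ! i) = es ! i)"

lemma cycle_walk_owner:
  assumes r: "cycle_walk F C vs es" and i: "i < length vs"
  shows "owner (es ! i) \<in> I" "f (owner (es ! i)) = es ! i"
    "owner (es ! i) = vs ! i \<or> owner (es ! i) = vs ! ((i + 1) mod length vs)"
proof -
  have "es ! i \<in> F" using r i nth_mem[of i es] unfolding cycle_walk_def by auto
  thus "owner (es ! i) \<in> I" "f (owner (es ! i)) = es ! i" using owner by auto
  have "owner (es ! i) \<in> dends og (es ! i)" using owner_incident \<open>es ! i \<in> F\<close> by blast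
  thus "owner (es ! i) = vs ! i \<or> owner (es ! i) = vs ! ((i + 1) mod length vs)"
    using r i unfolding cycle_walk_def by auto
qed

text \<open>Owners are distinct, so once an edge of a cycle is owned by its second end, so is the next one.\<close>

lemma cycle_walk_owner_shift:
  assumes r: "cycle_walk F C vs es" and i: "i < length vs"
    and bwd: "owner (es ! i) = vs ! ((i + 1) mod length vs)"
  shows "owner (es ! ((i + 1) mod length vs)) = vs ! ((i + 2) mod length vs)"
proof (cases "length vs = 1")
  case True thus ?thesis using bwd i by simp
next
  case False
  let ?k = "length vs" let ?j = "(i + 1) mod ?k"
  have j: "?j < ?k" using i by (intro mod_less_divisor) linarith
  have "?j \<noteq> i"
  proof (cases "i + 1 < ?k")
    case False
    hence "i + 1 = ?k" using i by simp
    thus ?thesis using \<open>?k \<noteq> 1\<close> by auto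
  qed simp
  hence "es ! ?j \<noteq> es ! i" using r i j unfolding cycle_walk_def by (simp add: nth_eq_iff_index_eq)
  hence "owner (es ! ?j) \<noteq> vs ! ?j"
    using bwd cycle_walk_owner(2)[OF r i] cycle_walk_owner(2)[OF r j] by metis
  hence "owner (es ! ?j) = vs ! ((?j + 1) mod ?k)" using cycle_walk_owner(3)[OF r j] by blast
  thus ?thesis by (simp add: mod_Suc_eq)
qed

lemma cycle_walk_owner_backward:
  assumes r: "cycle_walk F C vs es" and i0: "i0 < length vs" "owner (es ! i0) \<noteq> vs ! i0"
    and i: "i < length vs"
  shows "owner (es ! i) = vs ! ((i + 1) mod length vs)"
proof -
  let ?k = "length vs"
  have all: "owner (es ! ((i0 + d) mod ?k)) = vs ! ((i0 + d + 1) mod ?k)" for d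
  proof (induction d)
    case 0 thus ?case using cycle_walk_owner(3)[OF r i0(1)] i0 by simp
  next
    case (Suc d)
    define m where "m = (i0 + d) mod ?k"
    have m: "m < ?k" unfolding m_def using i0 by (intro mod_less_divisor) linarith
    have "(m + 1) mod ?k = (i0 + d + 1) mod ?k" "(m + 2) mod ?k = (i0 + Suc d + 1) mod ?k"
      unfolding m_def using mod_add_left_eq[of "i0 + d" ?k 1] mod_add_left_eq[of "i0 + d" ?k 2]
      by simp_all
    thus ?case using cycle_walk_owner_shift[OF r m] Suc.IH unfolding m_def by simp
  qed
  have "i0 + (i + ?k - i0) = i + ?k" using i0 by simp
  moreover have "(i + ?k + 1) mod ?k = (i + 1) mod ?k"
    by (metis add.commute add.left_commute mod_add_self2)
  ultimately have "(i0 + (i + ?k - i0)) mod ?k = i" "(i0 + (i + ?k - i0) + 1) mod ?k = (i + 1) mod ?k"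
    using i by simp_all
  thus ?thesis using all[of "i + ?k - i0"] by simp
qed

text \<open>Every cycle of \<open>F\<close> can be traversed so that each vertex owns the edge leaving it: the owners
  of its edges either all sit at the first ends or all at the second ends, and in the latter case
  the walk is reversed.\<close>

lemma fwd_walk_exists:
  assumes r: "cycle_walk F C vs es"
  shows "\<exists>vs' es'. fwd_walk C vs' es'"
proof (cases "\<forall>i<length vs. owner (es ! i) = vs ! i")
  case True
  hence "set vs \<subseteq> I" "\<forall>i<length vs. f (vs ! i) = es ! i"
    using cycle_walk_owner(1,2)[OF r] by (auto simp: in_set_conv_nth)
  thus ?thesis using r unfolding fwd_walk_def by blast
next
  case False
  then obtain i0 where i0: "i0 < length vs" "owner (es ! i0) \<noteq> vs ! i0" by blast
  let ?k = "length vs"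
  have "f (rev_cycle vs ! i) = rev es ! i \<and> rev_cycle vs ! i \<in> I" if i: "i < ?k" for i
  proof -
    have k: "?k - 1 - i < ?k" "length es = ?k" using i r unfolding cycle_walk_def by auto
    have "(?k - 1 - i + 1) mod ?k = (?k - i) mod ?k" using i by (simp add: Suc_diff_Suc)
    hence "owner (es ! (?k - 1 - i)) = rev_cycle vs ! i"
      using cycle_walk_owner_backward[OF r i0 k(1)] rev_cycle_nth[OF i] by simp
    thus ?thesis using cycle_walk_owner(1,2)[OF r k(1)] i k(2) by (auto simp: rev_nth)
  qed
  hence "fwd_walk C (rev_cycle vs) (rev es)"
    using cycle_walk_rev_cycle[OF r] unfolding fwd_walk_def by (auto simp: in_set_conv_nth rev_cycle_def)
  thus ?thesis by blast
qed


lemma fwd_walk_props: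
  assumes fw: "fwd_walk C vs es"
  shows "length vs \<ge> 1" "set vs \<subseteq> I" "distinct vs" "cverts C = set vs" "card C = length vs"
    "C = f ` set vs" "C \<subseteq> F"
    "\<And>i. i < length vs \<Longrightarrow> H (vs ! i) = vs ! ((i + 1) mod length vs)"
proof -
  have r: "cycle_walk F C vs es" and sI: "set vs \<subseteq> I" and fe: "\<And>i. i < length vs \<Longrightarrow> f (vs ! i) = es ! i"
    using fw unfolding fwd_walk_def by auto
  show "length vs \<ge> 1" "set vs \<subseteq> I" "distinct vs" "C \<subseteq> F" using r sI unfolding cycle_walk_def by auto
  show "cverts C = set vs" by (rule cycle_walk_cverts[OF r])
  show "card C = length vs" by (rule cycle_walk_card[OF r])
  have les: "length es = length vs" and sC: "set es = C" using r unfolding cycle_walk_def by auto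
  show "C = f ` set vs"
  proof -
    have "es = map f vs" using les fe by (simp add: list_eq_iff_nth_eq)
    thus ?thesis using sC by simp
  qed
  fix i assume i: "i < length vs"
  have viI: "vs ! i \<in> I" using sI i by (simp add: subset_iff)
  have "dends og (es ! i) = {vs ! i, vs ! ((i + 1) mod length vs)}" using r i unfolding cycle_walk_def by auto
  moreover have "dends og (es ! i) = {vs ! i, H (vs ! i)}" using dends_assign[OF viI] fe[OF i] by simp
  ultimately show "H (vs ! i) = vs ! ((i + 1) mod length vs)" using doubleton_eq_left by metis
qed

lemma fwd_walk_partner_pow:
  assumes fw: "fwd_walk C vs es" and i: "i < length vs"
  shows "(H ^^ j) (vs ! i) = vs ! ((i + j) mod length vs)"
proof (induction j)
  case 0 thus ?case using i by simp
next
  case (Suc j)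
  have k: "length vs > 0" using i by linarith
  have m: "(i + j) mod length vs < length vs" using k by (rule mod_less_divisor)
  have "(H ^^ Suc j) (vs ! i) = H (vs ! ((i + j) mod length vs))" using Suc by simp
  also have "\<dots> = vs ! (((i + j) mod length vs + 1) mod length vs)" using fwd_walk_props(8)[OF fw m] .
  also have "((i + j) mod length vs + 1) mod length vs = (i + Suc j) mod length vs"
    by (simp add: mod_Suc_eq)
  finally show ?case .
qed

lemma fwd_walk_orbit:
  assumes fw: "fwd_walk C vs es" and x: "x \<in> set vs"
  shows "range (\<lambda>j. (H ^^ j) x) = set vs"
proof -
  obtain i where i: "i < length vs" "vs ! i = x" using x by (auto simp: in_set_conv_nth)
  have k: "length vs > 0" using i(1) by linarith
  show ?thesis
  proof
    show "range (\<lambda>j. (H ^^ j) x) \<subseteq> set vs"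
      using fwd_walk_partner_pow[OF fw i(1)] i k by (auto intro!: nth_mem)
    show "set vs \<subseteq> range (\<lambda>j. (H ^^ j) x)"
    proof
      fix y assume "y \<in> set vs"
      then obtain t where t: "t < length vs" "vs ! t = y" by (auto simp: in_set_conv_nth)
      have "(i + (t + length vs - i)) mod length vs = t" using t i by simp
      hence "(H ^^ (t + length vs - i)) x = y" using fwd_walk_partner_pow[OF fw i(1), of "t + length vs - i"] i t by simp
      thus "y \<in> range (\<lambda>j. (H ^^ j) x)" by (metis rangeI)
    qed
  qed
qed

lemma is_cycle_fwd_walk:
  assumes "is_cycle og F C"
  obtains vs es where "fwd_walk C vs es"
  using fwd_walk_exists assms is_cycle_iff_walk by blast

lemma cycles_disjoint:
  assumes c1: "is_cycle og F C" and c2: "is_cycle og F C'" and x: "x \<in> cverts C" "x \<in> cverts C'"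
  shows "C = C'"
proof -
  obtain vs es where f1: "fwd_walk C vs es" using is_cycle_fwd_walk c1 by blast
  obtain vs' es' where f2: "fwd_walk C' vs' es'" using is_cycle_fwd_walk c2 by blast
  have x1: "x \<in> set vs" using x fwd_walk_props(4)[OF f1] by simp
  have x2: "x \<in> set vs'" using x fwd_walk_props(4)[OF f2] by simp
  have "set vs = set vs'"
    using fwd_walk_orbit[OF f1 x1] fwd_walk_orbit[OF f2 x2] by simp
  thus ?thesis using fwd_walk_props(6)[OF f1] fwd_walk_props(6)[OF f2] by simp
qed

lemma cverts_interior: "is_cycle og F C \<Longrightarrow> cverts C \<subseteq> I"
  using is_cycle_fwd_walk fwd_walk_props(2,4) by metis

lemma partner_cverts: assumes "is_cycle og F C" "x \<in> cverts C" shows "H x \<in> cverts C"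
proof -
  obtain vs es where fw: "fwd_walk C vs es" using is_cycle_fwd_walk assms(1) by blast
  have "(H ^^ 1) x \<in> range (\<lambda>j. (H ^^ j) x)" by blast
  thus ?thesis using fwd_walk_orbit[OF fw] assms(2) fwd_walk_props(4)[OF fw] by simp
qed

lemma partner_neq: assumes "C \<in> long_cycles F" "x \<in> cverts C" shows "H x \<noteq> x"
proof -
  have cy: "is_cycle og F C" and c2: "2 \<le> card C" using assms unfolding long_cycles_def by auto
  obtain vs es where fw: "fwd_walk C vs es" using is_cycle_fwd_walk cy by blast
  have k: "length vs \<ge> 2" using c2 fwd_walk_props(5)[OF fw] by simp
  obtain i where i: "i < length vs" "vs ! i = x" using assms(2) fwd_walk_props(4)[OF fw] by (auto simp: in_set_conv_nth)
  have "H x = vs ! ((i + 1) mod length vs)" using fwd_walk_props(8)[OF fw i(1)] i by simp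
  moreover have "(i + 1) mod length vs \<noteq> i"
  proof (cases "i + 1 < length vs")
    case True thus ?thesis by simp
  next
    case False hence "i + 1 = length vs" using i by simp
    thus ?thesis using k by auto
  qed
  moreover have "(i + 1) mod length vs < length vs" using i(1) by (intro mod_less_divisor) linarith
  ultimately show ?thesis using nth_eq_iff_index_eq[OF fwd_walk_props(3)[OF fw], of "(i + 1) mod length vs" i] i by auto
qed

definition cycle_perm :: "('v, 'a) dedge set \<Rightarrow> 'v \<Rightarrow> 'v" where
  "cycle_perm C u = (if u \<in> cverts C then H u else u)"

lemma cycle_perm_eq:
  assumes fw: "fwd_walk C vs es"
  shows "cycle_perm C = cycle_of_list vs"
proof
  fix u
  show "cycle_perm C u = cycle_of_list vs u"
  proof (cases "u \<in> set vs")
    case True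
    then obtain i where i: "i < length vs" "vs ! i = u" by (auto simp: in_set_conv_nth)
    have d: "distinct vs" using fwd_walk_props(3)[OF fw] .
    have "map (cycle_of_list vs) vs = rotate1 vs" using cyclic_rotation[OF d, of 1] by simp
    hence "cycle_of_list vs (vs ! i) = rotate1 vs ! i" using i by (metis nth_map)
    also have "\<dots> = vs ! (Suc i mod length vs)" using nth_rotate1[OF i(1)] .
    finally have "cycle_of_list vs u = vs ! ((i + 1) mod length vs)" using i by simp
    moreover have "cycle_perm C u = H u" unfolding cycle_perm_def using True fwd_walk_props(4)[OF fw] by simp
    ultimately show ?thesis using fwd_walk_props(8)[OF fw i(1)] i by simp
  next
    case False
    hence "cycle_of_list vs u = u" by (rule id_outside_supp)
    thus ?thesis unfolding cycle_perm_def using fwd_walk_props(4)[OF fw] False by simp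
  qed
qed

lemma cycle_perm_sign:
  assumes "is_cycle og F C"
  shows "sign (cycle_perm C) = (-1) ^ (card C - 1)" "cycle_perm C permutes cverts C"
proof -
  obtain vs es where fw: "fwd_walk C vs es" using is_cycle_fwd_walk assms by blast
  show "sign (cycle_perm C) = (-1) ^ (card C - 1)"
    using cycle_perm_eq[OF fw] sign_cycle_of_list[OF fwd_walk_props(3)[OF fw]] fwd_walk_props(5)[OF fw] by simp
  show "cycle_perm C permutes cverts C"
    using cycle_perm_eq[OF fw] cycle_permutes fwd_walk_props(4)[OF fw] by simp
qed

lemma partner_orbit_interior:
  assumes y: "y \<in> I" and k: "(H ^^ k) y = y" "0 < k" and j: "j < k"
  shows "(H ^^ j) y \<in> I"
proof (rule ccontr)
  assume "(H ^^ j) y \<notin> I"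
  hence "(H ^^ (k - j)) ((H ^^ j) y) = (H ^^ j) y" by (rule partner_pow_boundary)
  moreover have "(H ^^ (k - j)) ((H ^^ j) y) = (H ^^ k) y"
    using j by (simp add: funpow_apply_add)
  ultimately show False using k y \<open>(H ^^ j) y \<notin> I\<close> by simp
qed

lemma partner_orbit_fwd_walk:
  assumes y: "y \<in> I" and k: "(H ^^ k) y = y" "0 < k"
    and least: "\<And>j. 0 < j \<Longrightarrow> j < k \<Longrightarrow> (H ^^ j) y \<noteq> y"
  defines "vs \<equiv> map (\<lambda>j. (H ^^ j) y) [0..<k]"
  shows "fwd_walk (f ` set vs) vs (map f vs)"
proof -
  have len: "length vs = k" unfolding vs_def by simp
  have nth: "\<And>i. i < k \<Longrightarrow> vs ! i = (H ^^ i) y" unfolding vs_def by simp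
  have sI: "set vs \<subseteq> I" unfolding vs_def using partner_orbit_interior[OF y k] by auto
  have dist: "distinct vs" unfolding vs_def by (rule distinct_funpow_orbit[OF k(1) least])
  have cr: "cycle_walk F (f ` set vs) vs (map f vs)"
    unfolding cycle_walk_def
  proof (intro conjI allI impI)
    show "f ` set vs \<subseteq> F" using sI assign_in by blast
    show "length vs \<ge> 1" using len k by simp
    show "length (map f vs) = length vs" by simp
    show "distinct vs" by (rule dist)
    show "distinct (map f vs)" using dist assign_inj sI by (simp add: distinct_map inj_on_subset)
    show "set (map f vs) = f ` set vs" by simp
    fix i assume i: "i < length vs"
    have viI: "vs ! i \<in> I" using sI i by (simp add: subset_iff)
    have "H (vs ! i) = (H ^^ (i + 1)) y" using nth i len by simp
    also have "\<dots> = vs ! ((i + 1) mod length vs)"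
    proof (cases "i + 1 < k")
      case True thus ?thesis using nth len by simp
    next
      case False hence "i + 1 = k" using i len by simp
      thus ?thesis using k nth len by simp
    qed
    finally show "dends og (map f vs ! i) = {vs ! i, vs ! ((i + 1) mod length vs)}"
      using dends_assign[OF viI] i by simp
  qed
  show ?thesis unfolding fwd_walk_def using cr sI by simp
qed

lemma periodic_partner_cycle:
  assumes y: "y \<in> I" and j: "(H ^^ j) y = y" "0 < j"
  obtains C where "is_cycle og F C" "cverts C = range (\<lambda>i. (H ^^ i) y)"
proof -
  define m where "m = least_power H y"
  have m: "(H ^^ m) y = y" "0 < m" using least_powerI[OF j] unfolding m_def by auto
  have least: "(H ^^ i) y \<noteq> y" if "0 < i" "i < m" for i
    using least_power_le[where f=H and n=i and x=y] that unfolding m_def by auto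
  define vs where "vs = map (\<lambda>i. (H ^^ i) y) [0..<m]"
  have fw: "fwd_walk (f ` set vs) vs (map f vs)"
    unfolding vs_def by (rule partner_orbit_fwd_walk[OF y m least])
  have "y \<in> set vs" using m(2) unfolding vs_def by (auto intro: image_eqI[of _ _ 0])
  hence "cverts (f ` set vs) = range (\<lambda>i. (H ^^ i) y)"
    using fwd_walk_props(4)[OF fw] fwd_walk_orbit[OF fw] by simp
  moreover have "is_cycle og F (f ` set vs)" using fw unfolding fwd_walk_def is_cycle_iff_walk by blast
  ultimately show ?thesis using that by blast
qed

end

section \<open>Permutations compatible with an assignment\<close>

context assignment begin

lemma finite_F: "finite F" using FD finite_D finite_subset by blast

lemma finite_long_cycles: "finite (long_cycles F)"
proof -
  have "long_cycles F \<subseteq> Pow F" unfolding long_cycles_def using is_cycle_subset by blast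
  moreover have "finite (Pow F)" using finite_F by simp
  ultimately show ?thesis by (rule finite_subset)
qed

lemma long_cycles_is_cycle: "C \<in> long_cycles F \<Longrightarrow> is_cycle og F C" unfolding long_cycles_def by blast

lemma card_cverts: assumes "is_cycle og F C" shows "card (cverts C) = card C" "finite (cverts C)"
proof -
  obtain vs es where fw: "fwd_walk C vs es" using is_cycle_fwd_walk assms by blast
  show "card (cverts C) = card C" using fwd_walk_props(3,4,5)[OF fw] distinct_card[of vs] by simp
  show "finite (cverts C)" using fwd_walk_props(4)[OF fw] by simp
qed

definition compatible :: "('v \<Rightarrow> 'v) \<Rightarrow> bool" where
  "compatible p \<longleftrightarrow> p permutes I \<and> (\<forall>u\<in>I. p u \<in> dends og (f u))"

definition cycles_perm :: "('v, 'a) dedge set set \<Rightarrow> 'v \<Rightarrow> 'v" where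
  "cycles_perm T u = (if u \<in> \<Union>(cverts ` T) then H u else u)"

lemma cycles_perm_insert:
  assumes T: "T \<subseteq> long_cycles F" and C: "C \<in> long_cycles F" "C \<notin> T"
  shows "cycles_perm (insert C T) = cycle_perm C \<circ> cycles_perm T"
proof
  fix u
  have disj: "cverts C \<inter> cverts C' = {}" if "C' \<in> T" for C'
    using cycles_disjoint[OF long_cycles_is_cycle[OF C(1)] long_cycles_is_cycle] that T C(2) by blast
  show "cycles_perm (insert C T) u = (cycle_perm C \<circ> cycles_perm T) u"
  proof (cases "u \<in> cverts C")
    case True
    hence "u \<notin> \<Union>(cverts ` T)" using disj by blast
    thus ?thesis using True unfolding cycles_perm_def cycle_perm_def by simp
  next
    case False
    show ?thesis
    proof (cases "u \<in> \<Union>(cverts ` T)")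
      case True
      then obtain C' where C': "C' \<in> T" "u \<in> cverts C'" by blast
      have "H u \<in> cverts C'" using partner_cverts[OF long_cycles_is_cycle C'(2)] C' T by blast
      hence "H u \<notin> cverts C" using disj[OF C'(1)] by blast
      thus ?thesis using True False unfolding cycles_perm_def cycle_perm_def by simp
    next
      case False2: False
      thus ?thesis using False unfolding cycles_perm_def cycle_perm_def by simp
    qed
  qed
qed

lemma cycles_perm_permutes_sign:
  assumes T: "T \<subseteq> long_cycles F"
  shows "cycles_perm T permutes \<Union>(cverts ` T) \<and> sign (cycles_perm T) = (\<Prod>C\<in>T. (-1) ^ (card C - 1))"
proof -
  have "finite T" using T finite_long_cycles finite_subset by blast
  thus ?thesis using T
  proof (induction T rule: finite_subset_induct')
    case empty
    have e: "cycles_perm {} = id" by (rule ext) (simp add: cycles_perm_def)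
    have "id permutes \<Union>(cverts ` {})" by (rule permutes_id)
    moreover have "sign (id::'v\<Rightarrow>'v) = (\<Prod>C\<in>{}. (-1) ^ (card C - 1))" by simp
    ultimately show ?case unfolding e by blast
  next
    case (insert C T)
    have eq: "cycles_perm (insert C T) = cycle_perm C \<circ> cycles_perm T" by (rule cycles_perm_insert) (use insert in auto)
    have cy: "is_cycle og F C" using insert long_cycles_is_cycle by blast
    have r: "cycle_perm C permutes cverts C" "sign (cycle_perm C) = (-1) ^ (card C - 1)" using cycle_perm_sign[OF cy] by auto
    have p1: "cycle_perm C permutes \<Union>(cverts ` insert C T)" using r(1) by (rule permutes_subset) auto
    have p2: "cycles_perm T permutes \<Union>(cverts ` insert C T)" using insert.IH by (auto intro: permutes_subset)
    have finU: "finite (\<Union>(cverts ` insert C T))" using insert card_cverts long_cycles_is_cycle by auto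
    have perm: "permutation (cycle_perm C)" "permutation (cycles_perm T)"
      using p1 p2 finU permutes_imp_permutation by blast+
    have "sign (cycles_perm (insert C T)) = sign (cycle_perm C) * sign (cycles_perm T)"
      unfolding eq by (rule sign_compose[OF perm])
    also have "\<dots> = (\<Prod>C\<in>insert C T. (-1) ^ (card C - 1))"
      using insert r(2) by simp
    finally have sg: "sign (cycles_perm (insert C T)) = (\<Prod>C\<in>insert C T. (-1) ^ (card C - 1))" .
    have pm: "cycles_perm (insert C T) permutes \<Union>(cverts ` insert C T)" unfolding eq by (rule permutes_compose[OF p2 p1])
    show ?case by (rule conjI[OF pm sg])
  qed
qed

lemma cycles_perm_moved:
  assumes T: "T \<subseteq> long_cycles F"
  shows "{u\<in>I. cycles_perm T u \<noteq> u} = \<Union>(cverts ` T)"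
proof
  show "{u\<in>I. cycles_perm T u \<noteq> u} \<subseteq> \<Union>(cverts ` T)" unfolding cycles_perm_def by auto
  show "\<Union>(cverts ` T) \<subseteq> {u\<in>I. cycles_perm T u \<noteq> u}"
  proof
    fix u assume u: "u \<in> \<Union>(cverts ` T)"
    then obtain C where C: "C \<in> T" "u \<in> cverts C" by blast
    have "u \<in> I" using cverts_interior[OF long_cycles_is_cycle] C T by blast
    moreover have "H u \<noteq> u" using partner_neq C T by blast
    ultimately show "u \<in> {u\<in>I. cycles_perm T u \<noteq> u}" using u unfolding cycles_perm_def by simp
  qed
qed

lemma card_cycles_perm_moved:
  assumes T: "T \<subseteq> long_cycles F"
  shows "card {u\<in>I. cycles_perm T u \<noteq> u} = (\<Sum>C\<in>T. card C)"
proof -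
  have fT: "finite T" using T finite_long_cycles finite_subset by blast
  have "card (\<Union>(cverts ` T)) = (\<Sum>C\<in>T. card (cverts C))"
  proof (rule card_UN_disjoint[OF fT])
    show "\<forall>C\<in>T. finite (cverts C)" using T card_cverts long_cycles_is_cycle by blast
    show "\<forall>C\<in>T. \<forall>C'\<in>T. C \<noteq> C' \<longrightarrow> cverts C \<inter> cverts C' = {}"
      using T cycles_disjoint long_cycles_is_cycle by blast
  qed
  also have "\<dots> = (\<Sum>C\<in>T. card C)" using T card_cverts long_cycles_is_cycle by (intro sum.cong) auto
  finally show ?thesis using cycles_perm_moved[OF T] by simp
qed

lemma compatible_iff: "u \<in> I \<Longrightarrow> p u \<in> dends og (f u) \<longleftrightarrow> p u = u \<or> p u = H u"
  using dends_assign by simp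

lemma cycles_perm_compatible:
  assumes T: "T \<subseteq> long_cycles F"
  shows "compatible (cycles_perm T)"
  unfolding compatible_def
proof
  have "\<Union>(cverts ` T) \<subseteq> I" using T cverts_interior long_cycles_is_cycle by blast
  thus "cycles_perm T permutes I" using cycles_perm_permutes_sign[OF T] permutes_subset by blast
  show "\<forall>u\<in>I. cycles_perm T u \<in> dends og (f u)" using compatible_iff unfolding cycles_perm_def by auto
qed

lemma inj_on_cycles_perm: "inj_on cycles_perm (Pow (long_cycles F))"
proof -
  have sub: "T1 \<subseteq> T2" if T1: "T1 \<subseteq> long_cycles F" and T2: "T2 \<subseteq> long_cycles F" and e: "cycles_perm T1 = cycles_perm T2" for T1 T2
  proof
    fix C assume C: "C \<in> T1"
    have cy: "is_cycle og F C" using C T1 long_cycles_is_cycle by blast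
    obtain x where x: "x \<in> cverts C" using cverts_nonempty[OF cy] by blast
    have xI: "x \<in> I" using cverts_interior[OF cy] x by blast
    have "x \<in> {u\<in>I. cycles_perm T1 u \<noteq> u}" using cycles_perm_moved[OF T1] x C by blast
    hence "x \<in> {u\<in>I. cycles_perm T2 u \<noteq> u}" using e by simp
    then obtain C' where C': "C' \<in> T2" "x \<in> cverts C'" using cycles_perm_moved[OF T2] by blast
    have "C = C'" using cycles_disjoint[OF cy long_cycles_is_cycle x C'(2)] C' T2 by blast
    thus "C \<in> T2" using C' by simp
  qed
  show ?thesis
  proof (rule inj_onI)
    fix T1 T2 assume "T1 \<in> Pow (long_cycles F)" "T2 \<in> Pow (long_cycles F)" "cycles_perm T1 = cycles_perm T2"
    thus "T1 = T2" using sub[of T1 T2] sub[of T2 T1] by auto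
  qed
qed

lemma compatible_moved:
  assumes "compatible p" "p u \<noteq> u"
  shows "p u = H u" "p (p u) \<noteq> p u" "u \<in> I"
proof -
  have pp: "p permutes I" using assms(1) unfolding compatible_def by blast
  show "u \<in> I" using assms(2) permutes_not_in[OF pp] by blast
  thus "p u = H u" using assms compatible_iff unfolding compatible_def by blast
  show "p (p u) \<noteq> p u" using assms(2) permutes_inj[OF pp] by (simp add: inj_eq)
qed

lemma compatible_pow_moved:
  assumes "compatible p" "p u \<noteq> u"
  shows "(p ^^ j) u = (H ^^ j) u \<and> p ((p ^^ j) u) \<noteq> (p ^^ j) u"
proof (induction j)
  case (Suc j)
  hence moved: "p ((p ^^ j) u) \<noteq> (p ^^ j) u" and eq: "(p ^^ j) u = (H ^^ j) u" by auto
  show ?case using compatible_moved[OF assms(1) moved] eq by simp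
qed (use assms in simp)

text \<open>A compatible permutation moves each vertex along its cycle of the partner map, so its
  support is a union of long cycles.\<close>

lemma compatible_moved_long_cycle:
  assumes cp: "compatible p" and u: "p u \<noteq> u"
  obtains C where "C \<in> long_cycles F" "u \<in> cverts C" "\<forall>x\<in>cverts C. p x \<noteq> x"
proof -
  have perm: "permutation p"
    using cp finite_I permutes_imp_permutation unfolding compatible_def by blast
  obtain k where k: "(p ^^ k) u = u" "0 < k" using least_power_of_permutation[OF perm] by blast
  hence "(H ^^ k) u = u" using compatible_pow_moved[OF cp u, of k] by simp
  then obtain C where C: "is_cycle og F C" "cverts C = range (\<lambda>i. (H ^^ i) u)"
    using periodic_partner_cycle[OF compatible_moved(3)[OF cp u] _ k(2)] by blast
  have moved: "\<forall>x\<in>cverts C. p x \<noteq> x"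
  proof
    fix x assume "x \<in> cverts C"
    then obtain i where "x = (H ^^ i) u" using C(2) by auto
    thus "p x \<noteq> x" using compatible_pow_moved[OF cp u, of i] by metis
  qed
  have "u \<in> cverts C" "H u \<in> cverts C"
    using C(2) range_eqI[of u "\<lambda>i. (H ^^ i) u" 0] range_eqI[of "H u" "\<lambda>i. (H ^^ i) u" 1] by auto
  moreover have "H u \<noteq> u" using compatible_moved(1)[OF cp u] u by simp
  ultimately have "card {u, H u} \<le> card (cverts C)" "card {u, H u} = 2"
    using card_mono[OF card_cverts(2)[OF C(1)], of "{u, H u}"] by auto
  hence "C \<in> long_cycles F" using C(1) card_cverts(1)[OF C(1)] unfolding long_cycles_def by simp
  thus ?thesis using that \<open>u \<in> cverts C\<close> moved by blast
qed

lemma compatible_eq_cycles_perm: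
  assumes cp: "compatible p"
  shows "\<exists>T\<subseteq>long_cycles F. p = cycles_perm T"
proof -
  define T where "T = {C\<in>long_cycles F. \<forall>x\<in>cverts C. p x \<noteq> x}"
  have "p u = cycles_perm T u" for u
  proof (cases "p u = u")
    case False
    then obtain C where "C \<in> long_cycles F" "u \<in> cverts C" "\<forall>x\<in>cverts C. p x \<noteq> x"
      using compatible_moved_long_cycle[OF cp] by blast
    hence "u \<in> \<Union>(cverts ` T)" unfolding T_def by blast
    thus ?thesis using compatible_moved(1)[OF cp False] unfolding cycles_perm_def by simp
  qed (auto simp: cycles_perm_def T_def)
  moreover have "T \<subseteq> long_cycles F" unfolding T_def by blast
  ultimately show ?thesis by blast
qed

lemma bij_betw_cycles_perm: "bij_betw cycles_perm (Pow (long_cycles F)) {p. compatible p}"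
  unfolding bij_betw_def
proof
  show "inj_on cycles_perm (Pow (long_cycles F))" by (rule inj_on_cycles_perm)
  show "cycles_perm ` Pow (long_cycles F) = {p. compatible p}"
    using cycles_perm_compatible compatible_eq_cycles_perm by blast
qed

lemma card_compatible: "card {p. compatible p} = 2 ^ card (long_cycles F)"
proof -
  have "card (Pow (long_cycles F)) = card {p. compatible p}" by (rule bij_betw_same_card[OF bij_betw_cycles_perm])
  thus ?thesis using card_Pow[OF finite_long_cycles] by simp
qed

lemma sign_plus_one: "(-1::complex) ^ (n - 1) + 1 = (if odd n then 2 else 0)" if "n \<ge> 1"
  using that by (cases n) auto

lemma sign_mult_parity_plus_one: "(-1::complex) ^ (n - 1) * (-1) ^ n + 1 = 0" if "n \<ge> 1"
  using that by (cases n) auto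

text \<open>Summing over subsets \<open>T\<close> of the long cycles factorises: a cycle of length \<open>k\<close> contributes
  sign \<open>(-1)\<^sup>k\<^sup>-\<^sup>1\<close> and moves \<open>k\<close> vertices, so the unsigned and the signed expansion become
  \<open>\<Prod>\<^sub>C((-1)\<^sup>|\<^sup>C\<^sup>|\<^sup>-\<^sup>1 + 1)\<close> and \<open>\<Prod>\<^sub>C(-1 + 1)\<close>.\<close>

lemma sum_compatible:
  "(\<Sum>p\<in>{p. compatible p}. of_int (sign p) * (1 - (-1) ^ card {u\<in>I. p u \<noteq> u})) =
     (if long_cycles F \<noteq> {} \<and> (\<forall>C\<in>long_cycles F. odd (card C)) then 2 ^ card (long_cycles F) else (0::complex))"
proof -
  let ?s = "\<lambda>C. (-1::complex) ^ (card C - 1)"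
  have ge1: "card C \<ge> 1" if "C \<in> long_cycles F" for C using that unfolding long_cycles_def by simp
  have "(\<Sum>p\<in>{p. compatible p}. of_int (sign p) * (1 - (-1) ^ card {u\<in>I. p u \<noteq> u})) =
      (\<Sum>T\<in>Pow (long_cycles F). of_int (sign (cycles_perm T)) * (1 - (-1) ^ card {u\<in>I. cycles_perm T u \<noteq> u}))"
    using sum.reindex_bij_betw[OF bij_betw_cycles_perm, symmetric] by simp
  also have "\<dots> = (\<Sum>T\<in>Pow (long_cycles F). (\<Prod>C\<in>T. ?s C) - (\<Prod>C\<in>T. ?s C * (-1) ^ card C))"
  proof (rule sum.cong[OF refl])
    fix T assume "T \<in> Pow (long_cycles F)"
    hence T: "T \<subseteq> long_cycles F" by simp
    have "of_int (sign (cycles_perm T)) = (\<Prod>C\<in>T. ?s C)" using cycles_perm_permutes_sign[OF T] by simp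
    moreover have "(-1::complex) ^ card {u\<in>I. cycles_perm T u \<noteq> u} = (\<Prod>C\<in>T. (-1) ^ card C)"
      using card_cycles_perm_moved[OF T] by (simp add: power_sum)
    ultimately show "of_int (sign (cycles_perm T)) * (1 - (-1) ^ card {u\<in>I. cycles_perm T u \<noteq> u}) =
        (\<Prod>C\<in>T. ?s C) - (\<Prod>C\<in>T. ?s C * (-1) ^ card C)"
      by (simp add: prod.distrib algebra_simps)
  qed
  also have "\<dots> = (\<Prod>C\<in>long_cycles F. ?s C + 1) - (\<Prod>C\<in>long_cycles F. ?s C * (-1) ^ card C + 1)"
    by (simp add: sum_subtractf sum_Pow_prod[OF finite_long_cycles])
  also have "\<dots> = (\<Prod>C\<in>long_cycles F. if odd (card C) then 2 else 0) - (\<Prod>C\<in>long_cycles F. 0)"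
    using ge1 sign_plus_one sign_mult_parity_plus_one
    by (intro arg_cong2[where f = minus] prod.cong refl) presburger+
  also have "\<dots> = (if long_cycles F \<noteq> {} \<and> (\<forall>C\<in>long_cycles F. odd (card C)) then 2 ^ card (long_cycles F) else 0)"
    by (auto simp: prod_if_all[OF finite_long_cycles] finite_long_cycles card_gt_0_iff)
  finally show ?thesis .
qed


lemma assign_undefined: "v \<notin> I \<Longrightarrow> f v = undefined"
  using assign_PiE unfolding PiE_def extensional_def by blast

lemma compatible_permutes: "compatible p \<Longrightarrow> p permutes I" unfolding compatible_def by blast

lemma assign_comp_inv:
  assumes cp: "compatible p"
  shows "assign F (f \<circ> inv p)"
  unfolding assign_def
proof (intro conjI ballI)
  have pp: "p permutes I" using compatible_permutes[OF cp] .
  have ip: "inv p permutes I" using permutes_inv[OF pp] .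
  have img: "inv p ` I = I" using permutes_image[OF ip] .
  show "f \<circ> inv p \<in> I \<rightarrow>\<^sub>E F"
  proof (rule PiE_I)
    fix v assume "v \<in> I"
    hence "inv p v \<in> I" using img by blast
    thus "(f \<circ> inv p) v \<in> F" using assign_in by simp
  next
    fix v assume "v \<notin> I"
    hence "inv p v = v" using permutes_not_in[OF ip] by blast
    thus "(f \<circ> inv p) v = undefined" using assign_undefined \<open>v \<notin> I\<close> by simp
  qed
  have fi: "inj_on f (inv p ` I)" using img assign_inj by simp
  show "inj_on (f \<circ> inv p) I"
    by (rule comp_inj_on[OF inj_on_subset[OF permutes_inj[OF ip] subset_UNIV] fi])
  show "(f \<circ> inv p) ` I = F" by (simp only: image_comp[symmetric] img assign_image)
  fix v assume v: "v \<in> I"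
  let ?u = "inv p v"
  have u: "?u \<in> I" using v img by blast
  have "p ?u = v" using permutes_inverses(1)[OF pp] .
  thus "v \<in> dends og ((f \<circ> inv p) v)" using cp u unfolding compatible_def by force
qed

text \<open>Conversely every assignment \<open>g\<close> is \<open>f \<circ> q\<close> for the permutation \<open>q\<close> sending \<open>v\<close> to the
  \<open>f\<close>-owner of \<open>g v\<close>.\<close>

lemma assign_decompose:
  assumes ag: "assign F g"
  obtains p where "compatible p" "g = f \<circ> inv p"
proof -
  have gI: "\<And>v. v \<in> I \<Longrightarrow> g v \<in> F" and ginj: "inj_on g I" and gimg: "g ` I = F"
    and gown: "\<And>v. v \<in> I \<Longrightarrow> v \<in> dends og (g v)" and gext: "g \<in> I \<rightarrow>\<^sub>E F"
    using ag unfolding assign_def by auto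
  define q where "q v = (if v \<in> I then owner (g v) else v)" for v
  have "inj_on q I"
  proof (rule inj_onI)
    fix v v' assume v: "v \<in> I" "v' \<in> I" and "q v = q v'"
    hence "owner (g v) = owner (g v')" unfolding q_def by simp
    hence "g v = g v'" using owner[OF gI[OF v(1)]] owner[OF gI[OF v(2)]] by metis
    thus "v = v'" using ginj v by (simp add: inj_on_def)
  qed
  moreover have "q ` I = I"
  proof (intro equalityI subsetI)
    fix u assume u: "u \<in> I"
    have "f u \<in> g ` I" using assign_in u gimg by simp
    then obtain v where "v \<in> I" "g v = f u" by (auto simp: image_iff)
    thus "u \<in> q ` I" using u owner_assign unfolding q_def by force
  qed (use owner gI in \<open>auto simp: q_def\<close>)
  ultimately have qp: "q permutes I"
    by (intro bij_imp_permutes) (auto simp: bij_betw_def q_def)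
  have fq: "f \<circ> q = g"
  proof
    fix v show "(f \<circ> q) v = g v"
      using owner gI assign_undefined gext unfolding q_def PiE_def extensional_def by auto
  qed
  have "compatible (inv q)" unfolding compatible_def
  proof (intro conjI ballI permutes_inv[OF qp])
    fix u assume u: "u \<in> I"
    hence v: "inv q u \<in> I" using permutes_image[OF permutes_inv[OF qp]] by blast
    have "g (inv q u) = f u" using fq permutes_inverses(1)[OF qp, of u] by (metis comp_apply)
    thus "inv q u \<in> dends og (f u)" using gown[OF v] by simp
  qed
  moreover have "g = f \<circ> inv (inv q)" using fq permutes_inv_inv[OF qp] by simp
  ultimately show ?thesis using that by blast
qed

text \<open>Assignments of \<open>F\<close> correspond bijectively to permutations compatible with \<open>f\<close>, via \<open>p \<mapsto> f \<circ> p\<inverse>\<close>.\<close>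

lemma card_assign_compatible: "card {g. assign F g} = card {p. compatible p}"
proof -
  have "inj_on (\<lambda>p. f \<circ> inv p) {p. compatible p}"
  proof (rule inj_onI)
    fix p1 p2 assume p: "p1 \<in> {p. compatible p}" "p2 \<in> {p. compatible p}" and e: "f \<circ> inv p1 = f \<circ> inv p2"
    have pp: "p1 permutes I" "p2 permutes I" using p compatible_permutes by auto
    have "inv p1 v = inv p2 v" for v
    proof (cases "v \<in> I")
      case True
      hence "inv p1 v \<in> I" "inv p2 v \<in> I" using pp permutes_image permutes_inv by blast+
      moreover have "f (inv p1 v) = f (inv p2 v)" using e by (metis comp_apply)
      ultimately show ?thesis using assign_inj by (simp add: inj_on_def)
    qed (simp add: permutes_not_in[OF permutes_inv[OF pp(1)]] permutes_not_in[OF permutes_inv[OF pp(2)]])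
    hence "inv p1 = inv p2" by (rule ext)
    thus "p1 = p2" using permutes_inv_inv[OF pp(1)] permutes_inv_inv[OF pp(2)] by metis
  qed
  moreover have "(\<lambda>p. f \<circ> inv p) ` {p. compatible p} = {g. assign F g}"
    using assign_comp_inv assign_decompose by blast
  ultimately have "bij_betw (\<lambda>p. f \<circ> inv p) {p. compatible p} {g. assign F g}"
    unfolding bij_betw_def ..
  thus ?thesis by (simp add: bij_betw_same_card)
qed

end

section \<open>Graphs with an assignment lie in \<open>\<H>\<^sub>Q\<close>\<close>

context assignment begin

definition periodic :: "'v \<Rightarrow> bool" where "periodic y \<longleftrightarrow> (\<exists>j>0. (H ^^ j) y = y)"

definition limit_cycle :: "'v \<Rightarrow> 'v set" where "limit_cycle v = {y. \<exists>k. y = (H ^^ k) v \<and> periodic y}"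

lemma limit_cycle_nonempty: assumes v: "v \<in> X" shows "limit_cycle v \<noteq> {}"
proof -
  let ?g = "\<lambda>j. (H ^^ j) v"
  have img: "?g ` {0..card X} \<subseteq> X" using partner_pow_in_X v by blast
  have "card (?g ` {0..card X}) \<le> card X" using img finite_X card_mono by blast
  hence "card (?g ` {0..card X}) < card {0..card X}" by simp
  hence "\<not> inj_on ?g {0..card X}" by (rule pigeonhole)
  then obtain i j where ij: "i \<in> {0..card X}" "j \<in> {0..card X}" "i \<noteq> j" "?g i = ?g j"
    unfolding inj_on_def by blast
  have gen: "limit_cycle v \<noteq> {}" if ab: "a < b" "?g a = ?g b" for a b
  proof -
    have "(H ^^ (b - a)) ((H ^^ a) v) = (H ^^ (b - a + a)) v" by (rule funpow_apply_add)
    also have "b - a + a = b" using ab(1) by simp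
    finally have "(H ^^ (b - a)) ((H ^^ a) v) = (H ^^ a) v" using ab(2) by simp
    hence "periodic ((H ^^ a) v)" unfolding periodic_def using ab(1) by (intro exI[of _ "b - a"]) simp
    thus ?thesis unfolding limit_cycle_def by blast
  qed
  show ?thesis
  proof (cases "i < j")
    case True thus ?thesis using gen ij by blast
  next
    case False hence "j < i" using ij by simp
    thus ?thesis using gen ij by metis
  qed
qed

lemma periodic_partner_pow: assumes "periodic y" shows "periodic ((H ^^ k) y)"
proof -
  obtain j where j: "j > 0" "(H ^^ j) y = y" using assms unfolding periodic_def by blast
  have "(H ^^ j) ((H ^^ k) y) = (H ^^ (j + k)) y" by (rule funpow_apply_add)
  also have "\<dots> = (H ^^ (k + j)) y" by (simp add: add.commute)
  also have "\<dots> = (H ^^ k) ((H ^^ j) y)" by (rule funpow_apply_add[symmetric])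
  finally show ?thesis unfolding periodic_def using j by auto
qed

lemma limit_cycle_partner: "limit_cycle (H v) = limit_cycle v"
proof
  show "limit_cycle (H v) \<subseteq> limit_cycle v"
  proof
    fix y assume "y \<in> limit_cycle (H v)"
    then obtain k where "y = (H ^^ k) (H v)" "periodic y" unfolding limit_cycle_def by blast
    hence "y = (H ^^ Suc k) v" "periodic y" by (simp_all add: funpow_swap1)
    thus "y \<in> limit_cycle v" unfolding limit_cycle_def by blast
  qed
  show "limit_cycle v \<subseteq> limit_cycle (H v)"
  proof
    fix y assume "y \<in> limit_cycle v"
    then obtain k where k: "y = (H ^^ k) v" "periodic y" unfolding limit_cycle_def by blast
    show "y \<in> limit_cycle (H v)"
    proof (cases k)
      case (Suc m)
      hence "y = (H ^^ m) (H v)" using k by (simp add: funpow_swap1)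
      thus ?thesis using k unfolding limit_cycle_def by blast
    next
      case 0
      hence yv: "y = v" using k by simp
      then obtain j where j: "j > 0" "(H ^^ j) v = v" using k unfolding periodic_def by blast
      have "(H ^^ (j - 1)) ((H ^^ 1) v) = (H ^^ (j - 1 + 1)) v" by (rule funpow_apply_add)
      hence "(H ^^ (j - 1)) (H v) = v" using j by simp
      hence "y = (H ^^ (j - 1)) (H v)" using yv by simp
      thus ?thesis using k(2) unfolding limit_cycle_def by blast
    qed
  qed
qed

lemma limit_cycle_periodic: assumes "periodic y" shows "limit_cycle y = range (\<lambda>k. (H ^^ k) y)"
  unfolding limit_cycle_def using periodic_partner_pow[OF assms] by blast

lemma limit_cycle_adj:
  assumes "adj F x y" shows "limit_cycle x = limit_cycle y"
proof -
  obtain e where e: "e \<in> F" "dends og e = {x, y}" using assms by blast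
  let ?o = "owner e"
  have o: "?o \<in> I" "f ?o = e" using owner[OF e(1)] by auto
  hence "{?o, H ?o} = {x, y}" using dends_assign[OF o(1)] e by simp
  hence "(x = ?o \<and> y = H ?o) \<or> (x = H ?o \<and> y = ?o)" by (auto simp: doubleton_eq_iff)
  thus ?thesis using limit_cycle_partner by metis
qed

lemma limit_cycle_reach: "(adj F)\<^sup>*\<^sup>* x y \<Longrightarrow> limit_cycle x = limit_cycle y"
proof (induction rule: rtranclp_induct)
  case base thus ?case by simp
next
  case (step y z)
  have "limit_cycle y = limit_cycle z" by (rule limit_cycle_adj[OF step(2)])
  thus ?case using step(3) by simp
qed

lemma limit_cycle_comp: assumes "v \<in> comp_vertices X og F u" shows "limit_cycle v = limit_cycle u"
  using assms limit_cycle_reach unfolding comp_vertices_def by auto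

lemma limit_cycle_boundary: "v \<notin> I \<Longrightarrow> limit_cycle v = {v}"
proof -
  assume v: "v \<notin> I"
  have "periodic v" unfolding periodic_def using partner_boundary[OF v] by (intro exI[of _ 1]) simp
  thus ?thesis using limit_cycle_periodic partner_pow_boundary[OF v] by auto
qed

lemma limit_cycle_cverts:
  assumes cy: "is_cycle og F C" and x: "x \<in> cverts C"
  shows "limit_cycle x = cverts C"
proof -
  obtain vs es where fw: "fwd_walk C vs es" using is_cycle_fwd_walk cy by blast
  have xs: "x \<in> set vs" using x fwd_walk_props(4)[OF fw] by simp
  then obtain i where i: "i < length vs" "vs ! i = x" by (auto simp: in_set_conv_nth)
  have "(H ^^ length vs) x = x" using fwd_walk_partner_pow[OF fw i(1), of "length vs"] i by simp
  hence "periodic x" unfolding periodic_def using i by (intro exI[of _ "length vs"]) auto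
  thus ?thesis using limit_cycle_periodic fwd_walk_orbit[OF fw xs] fwd_walk_props(4)[OF fw] by simp
qed

lemma reach_partner_pow: "u \<in> X \<Longrightarrow> (adj F)\<^sup>*\<^sup>* u ((H ^^ k) u)"
proof (induction k)
  case 0 thus ?case by simp
next
  case (Suc k)
  show ?case
  proof (cases "(H ^^ k) u \<in> I")
    case True
    hence "adj F ((H ^^ k) u) ((H ^^ Suc k) u)" using adj_partner by simp
    thus ?thesis using Suc by (simp add: rtranclp.rtrancl_into_rtrancl)
  next
    case False thus ?thesis using Suc partner_boundary by simp
  qed
qed

lemma component_with_boundary:
  assumes W: "W \<in> components X og F" and b: "b \<in> W" "b \<in> dX"
  shows "W \<inter> dX = {b}" "cycles og (comp_edges og F W) = {}"
proof -
  obtain u0 where u0: "u0 \<in> X" "W = comp_vertices X og F u0" using W unfolding components_def by blast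
  have tW: "\<And>v. v \<in> W \<Longrightarrow> limit_cycle v = {b}"
    using limit_cycle_comp u0 b limit_cycle_boundary by (metis DiffD2)
  show "W \<inter> dX = {b}" using tW limit_cycle_boundary b by blast
  show "cycles og (comp_edges og F W) = {}"
  proof (rule ccontr)
    assume "cycles og (comp_edges og F W) \<noteq> {}"
    then obtain C where "is_cycle og (comp_edges og F W) C" unfolding cycles_def by blast
    hence cy: "is_cycle og F C" and CW: "C \<subseteq> comp_edges og F W" using is_cycle_comp_edges_iff by auto
    obtain x where x: "x \<in> cverts C" using cverts_nonempty[OF cy] by blast
    have "limit_cycle x = {b}" using tW cverts_subset_comp[OF CW] x by blast
    thus False using limit_cycle_cverts[OF cy x] cverts_interior[OF cy] b by auto
  qed
qed

lemma component_without_boundary: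
  assumes W: "W \<in> components X og F" and no_boundary: "W \<inter> dX = {}"
  obtains C where "cycles og (comp_edges og F W) = {C}"
proof -
  obtain u0 where u0: "u0 \<in> X" "W = comp_vertices X og F u0" using W unfolding components_def by blast
  obtain y where "y \<in> limit_cycle u0" using limit_cycle_nonempty[OF u0(1)] by blast
  then obtain k j where k: "y = (H ^^ k) u0" and j: "(H ^^ j) y = y" "0 < j"
    unfolding limit_cycle_def periodic_def by blast
  have yW: "y \<in> W"
    using reach_partner_pow[OF u0(1)] k partner_pow_in_X[OF u0(1)] u0 unfolding comp_vertices_def by blast
  hence yI: "y \<in> I" and Wy: "W = comp_vertices X og F y"
    using no_boundary u0 comp_vertices_eq[OF FD] unfolding comp_vertices_def by blast+
  obtain C0 where cy0: "is_cycle og F C0" and V0: "cverts C0 = range (\<lambda>i. (H ^^ i) y)"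
    using periodic_partner_cycle[OF yI j] by blast
  have y0: "y \<in> cverts C0" using V0 range_eqI[of y "\<lambda>i. (H ^^ i) y" 0] by simp
  have "cycles og (comp_edges og F W) = {C0}"
  proof (intro equalityI subsetI)
    fix C assume "C \<in> cycles og (comp_edges og F W)"
    hence cy: "is_cycle og F C" and CW: "C \<subseteq> comp_edges og F W"
      unfolding cycles_def using is_cycle_comp_edges_iff by auto
    obtain x where x: "x \<in> cverts C" using cverts_nonempty[OF cy] by blast
    have "limit_cycle x = limit_cycle y"
      using limit_cycle_comp cverts_subset_comp[OF CW] x yW u0(2) by blast
    hence "x \<in> cverts C0" using limit_cycle_cverts[OF cy x] limit_cycle_cverts[OF cy0 y0] x by simp
    thus "C \<in> {C0}" using cycles_disjoint[OF cy cy0 x] by simp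
  qed (use cycle_in_comp(2)[OF FD cy0 y0] cy0 Wy is_cycle_comp_edges_iff in \<open>auto simp: cycles_def\<close>)
  thus ?thesis using that by blast
qed

text \<open>If all long cycles are odd, the connected components are exactly those required by \<open>\<H>\<^sub>Q\<close>:
  the partner map drives every vertex either into a boundary vertex or onto a cycle, and this
  limit is constant along edges.\<close>

lemma assign_HQ:
  assumes odd: "\<forall>C\<in>long_cycles F. odd (card C)"
  shows "F \<in> HQ X dX A og rv"
  unfolding HQ_def
proof (intro CollectI conjI ballI FD)
  fix W assume W: "W \<in> components X og F"
  show "(card (W \<inter> dX) = 1 \<and> cycles og (comp_edges og F W) = {}) \<or>
        (W \<inter> dX = {} \<and> (\<exists>C. cycles og (comp_edges og F W) = {C} \<and> odd (card C)))"
  proof (cases "W \<inter> dX = {}")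
    case False
    then obtain b where "b \<in> W" "b \<in> dX" by blast
    thus ?thesis using component_with_boundary[OF W] by simp
  next
    case True
    then obtain C where C: "cycles og (comp_edges og F W) = {C}"
      using component_without_boundary[OF W] by blast
    hence cy: "is_cycle og F C" using is_cycle_comp_edges_iff unfolding cycles_def by blast
    have "odd (card C)"
      using odd cy is_cycle_card_pos[OF cy] unfolding long_cycles_def by (cases "card C = 1") auto
    thus ?thesis using True C by blast
  qed
qed

lemma assign_Ttri:
  assumes ne: "long_cycles F \<noteq> {}" and odd: "\<forall>C\<in>long_cycles F. odd (card C)"
  shows "F \<in> Ttri X dX A og rv"
  unfolding Ttri_def
proof (intro CollectI conjI)
  show "F \<in> HQ X dX A og rv" by (rule assign_HQ[OF odd])
  obtain C where C: "C \<in> long_cycles F" using ne by blast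
  have cy: "is_cycle og F C" using C long_cycles_is_cycle by blast
  have c2: "card C \<ge> 2" "odd (card C)" using C odd unfolding long_cycles_def by auto
  have c3: "card C \<ge> 3"
  proof (cases "card C = 2")
    case True thus ?thesis using c2 by simp
  next
    case False thus ?thesis using c2 by simp
  qed
  obtain x where x: "x \<in> cverts C" using cverts_nonempty[OF cy] by blast
  have xX: "x \<in> X" using cverts_interior[OF cy] x by blast
  have "C \<in> cycles og (comp_edges og F (comp_vertices X og F x))"
    unfolding cycles_def using is_cycle_comp_edges_iff cycle_in_comp[OF FD cy x] cy by blast
  thus "\<exists>W\<in>components X og F. \<exists>C\<in>cycles og (comp_edges og F W). card C \<ge> 3"
    using comp_in_components[OF xX] c3 by blast
qed

end

section \<open>Graphs in \<open>\<H>\<^sub>Q\<close> have an assignment\<close>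

text \<open>The assignment of a graph in \<open>\<H>\<^sub>Q\<close>: a vertex on one of the (disjoint) cycles takes the next
  edge of its cycle, every other interior vertex the first edge of a shortest path to the roots
  (boundary and cycle vertices) in the forest left after deleting the cycle edges.\<close>

locale hq_graph = boundary_graph X dX A og tm rv
  for X dX :: "'v set" and A :: "'a set" and og tm :: "'a \<Rightarrow> 'v" and rv :: "'a \<Rightarrow> 'a" +
  fixes F :: "('v, 'a) dedge set"
  assumes F_in_HQ: "F \<in> HQ X dX A og rv"
begin

lemma F_subset_D: "F \<subseteq> D" using F_in_HQ HQ_subset by blast

abbreviation "Cyc \<equiv> cycles og F"
abbreviation "cyc_edges \<equiv> \<Union> Cyc"
abbreviation "roots \<equiv> dX \<union> \<Union>(cverts ` Cyc)"
abbreviation "forest \<equiv> F - cyc_edges"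

lemma cycles_is_cycle: "C \<in> Cyc \<Longrightarrow> is_cycle og F C" unfolding cycles_def by simp

lemma cycle_edge_not_at: assumes "e \<in> F" "v \<in> dends og e" "v \<notin> roots" shows "e \<notin> cyc_edges"
proof
  assume "e \<in> cyc_edges"
  then obtain C where "C \<in> Cyc" "e \<in> C" by blast
  hence "v \<in> cverts C" using assms unfolding cverts_def by blast
  thus False using assms \<open>C \<in> Cyc\<close> by blast
qed

lemma roots_subset_X: "roots \<subseteq> X"
proof -
  have "cverts C \<subseteq> X" if "C \<in> Cyc" for C using HQ_cverts_interior[OF F_in_HQ cycles_is_cycle[OF that]] by blast
  thus ?thesis using boundary_subset by blast
qed

lemma reach_root:
  assumes v: "v \<in> X"
  shows "\<exists>r\<in>roots. (adj F)\<^sup>*\<^sup>* v r"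
proof -
  let ?W = "comp_vertices X og F v"
  have W: "?W \<in> components X og F" using comp_in_components[OF v] .
  have "(card (?W \<inter> dX) = 1 \<and> cycles og (comp_edges og F ?W) = {}) \<or>
        (?W \<inter> dX = {} \<and> (\<exists>C. cycles og (comp_edges og F ?W) = {C} \<and> odd (card C)))"
    using F_in_HQ W unfolding HQ_def by blast
  then obtain r where r: "r \<in> ?W" "r \<in> roots"
  proof
    assume "card (?W \<inter> dX) = 1 \<and> cycles og (comp_edges og F ?W) = {}"
    hence "?W \<inter> dX \<noteq> {}" by (intro notI) simp
    then obtain b where "b \<in> ?W \<inter> dX" by blast
    thus ?thesis using that by blast
  next
    assume "?W \<inter> dX = {} \<and> (\<exists>C. cycles og (comp_edges og F ?W) = {C} \<and> odd (card C))"
    then obtain C where C: "C \<in> cycles og (comp_edges og F ?W)" by blast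
    hence cy: "is_cycle og F C" "C \<subseteq> comp_edges og F ?W" using is_cycle_comp_edges_iff unfolding cycles_def by auto
    obtain x where x: "x \<in> cverts C" using cy(1) cverts_nonempty by blast
    have "x \<in> ?W" using cverts_subset_comp[OF cy(2)] x by blast
    moreover have "C \<in> Cyc" using cy(1) unfolding cycles_def by simp
    ultimately show ?thesis using that x by blast
  qed
  thus ?thesis unfolding comp_vertices_def by blast
qed

lemma reach_root_acyclic:
  assumes "(adj F)\<^sup>*\<^sup>* v r" "r \<in> roots"
  shows "\<exists>r'\<in>roots. (adj forest)\<^sup>*\<^sup>* v r'"
  using assms
proof (induction rule: converse_rtranclp_induct)
  case base thus ?case by blast
next
  case (step v v1)
  obtain r' where r': "r' \<in> roots" "(adj forest)\<^sup>*\<^sup>* v1 r'" using step by blast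
  show ?case
  proof (cases "v \<in> roots")
    case True thus ?thesis by blast
  next
    case False
    obtain e where e: "e \<in> F" "dends og e = {v, v1}" using step.hyps(1) by blast
    have "e \<notin> cyc_edges" using cycle_edge_not_at[OF e(1) _ False] e(2) by blast
    hence "adj forest v v1" using e by blast
    hence "(adj forest)\<^sup>*\<^sup>* v r'" using r'(2) by (rule converse_rtranclp_into_rtranclp)
    thus ?thesis using r'(1) by blast
  qed
qed

lemma reach_root_acyclic_ex: "v \<in> X \<Longrightarrow> \<exists>r\<in>roots. (adj forest)\<^sup>*\<^sup>* v r"
  using reach_root reach_root_acyclic by blast

definition root_dist :: "'v \<Rightarrow> nat" where
  "root_dist v = (LEAST n. \<exists>r\<in>roots. ((adj forest) ^^ n) v r)"

lemma root_dist_reach: assumes "v \<in> X" shows "\<exists>r\<in>roots. ((adj forest) ^^ root_dist v) v r"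
proof -
  obtain r where r: "r \<in> roots" "(adj forest)\<^sup>*\<^sup>* v r" using reach_root_acyclic_ex[OF assms] by blast
  obtain n where "((adj forest) ^^ n) v r" using rtranclp_imp_relpowp[OF r(2)] by blast
  note r(1) this
  hence "\<exists>n. \<exists>r\<in>roots. ((adj forest) ^^ n) v r" by blast
  thus ?thesis unfolding root_dist_def by (rule LeastI_ex)
qed

lemma root_dist_le: "r \<in> roots \<Longrightarrow> ((adj forest) ^^ n) v r \<Longrightarrow> root_dist v \<le> n"
  unfolding root_dist_def by (rule Least_le) blast

lemma root_dist_step:
  assumes v: "v \<in> X" "v \<notin> roots"
  shows "\<exists>e\<in>forest. \<exists>y. dends og e = {v, y} \<and> root_dist y < root_dist v"
proof -
  obtain r where r: "r \<in> roots" "((adj forest) ^^ root_dist v) v r" using root_dist_reach[OF v(1)] by blast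
  show ?thesis
  proof (cases "root_dist v")
    case 0
    hence "v = r" using r by simp
    thus ?thesis using v r by simp
  next
    case (Suc m)
    hence "((adj forest) ^^ Suc m) v r" using r by simp
    from relpowp_Suc_D2[OF this] obtain y where y: "adj forest v y" "((adj forest) ^^ m) y r" by blast
    have "root_dist y \<le> m" using root_dist_le[OF r(1) y(2)] .
    hence lt: "root_dist y < root_dist v" using Suc by simp
    from y(1) obtain e where e: "e \<in> forest" "dends og e = {v, y}" by blast
    show ?thesis using e lt by blast
  qed
qed

definition descent :: "'v \<Rightarrow> ('v, 'a) dedge" where
  "descent v = (SOME e. e \<in> forest \<and> (\<exists>y. dends og e = {v, y} \<and> root_dist y < root_dist v))"

lemma descent: assumes "v \<in> X" "v \<notin> roots"
  shows "descent v \<in> forest \<and> (\<exists>y. dends og (descent v) = {v, y} \<and> root_dist y < root_dist v)"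
proof -
  have "\<exists>e. e \<in> forest \<and> (\<exists>y. dends og e = {v, y} \<and> root_dist y < root_dist v)" using root_dist_step[OF assms] by blast
  thus ?thesis unfolding descent_def by (rule someI_ex)
qed

definition cycle_of :: "'v \<Rightarrow> ('v, 'a) dedge set" where
  "cycle_of v = (THE C. C \<in> Cyc \<and> v \<in> cverts C)"

lemma cycle_of: assumes "C \<in> Cyc" "v \<in> cverts C" shows "cycle_of v = C"
  unfolding cycle_of_def
proof (rule the_equality)
  show "C \<in> Cyc \<and> v \<in> cverts C" using assms by blast
  fix C' assume "C' \<in> Cyc \<and> v \<in> cverts C'"
  thus "C' = C" using HQ_cycles_disjoint[OF F_in_HQ] cycles_is_cycle assms by blast
qed

definition walk_of :: "('v, 'a) dedge set \<Rightarrow> 'v list \<times> ('v, 'a) dedge list" where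
  "walk_of C = (SOME p. cycle_walk F C (fst p) (snd p))"

lemma walk_of: assumes "C \<in> Cyc" shows "cycle_walk F C (fst (walk_of C)) (snd (walk_of C))"
proof -
  obtain vs es where "cycle_walk F C vs es" using cycles_is_cycle[OF assms] is_cycle_iff_walk by blast
  hence "\<exists>p. cycle_walk F C (fst p) (snd p)" by (intro exI[of _ "(vs, es)"]) simp
  thus ?thesis unfolding walk_of_def by (rule someI_ex)
qed

definition cycle_edge :: "'v \<Rightarrow> ('v, 'a) dedge" where
  "cycle_edge v = (let C = cycle_of v; vs = fst (walk_of C); es = snd (walk_of C)
                in es ! (THE i. i < length vs \<and> vs ! i = v))"

lemma cycle_edge:
  assumes C: "C \<in> Cyc" and i: "i < length (fst (walk_of C))"
  shows "cycle_edge (fst (walk_of C) ! i) = snd (walk_of C) ! i"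
proof -
  let ?vs = "fst (walk_of C)" and ?es = "snd (walk_of C)"
  have r: "cycle_walk F C ?vs ?es" by (rule walk_of[OF C])
  have v: "?vs ! i \<in> cverts C" using cycle_walk_cverts[OF r] i by simp
  have co: "cycle_of (?vs ! i) = C" by (rule cycle_of[OF C v])
  have d: "distinct ?vs" using r unfolding cycle_walk_def by simp
  have "(THE j. j < length ?vs \<and> ?vs ! j = ?vs ! i) = i"
    by (rule the_equality) (use i d in \<open>auto simp: nth_eq_iff_index_eq\<close>)
  thus ?thesis unfolding cycle_edge_def Let_def co by simp
qed

definition hq_assign :: "'v \<Rightarrow> ('v, 'a) dedge" where
  "hq_assign v = (if v \<in> I then (if v \<in> \<Union>(cverts ` Cyc) then cycle_edge v else descent v) else undefined)"

lemma hq_assign_walk_nth: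
  assumes C: "C \<in> Cyc" and i: "i < length (fst (walk_of C))"
  shows "hq_assign (fst (walk_of C) ! i) = snd (walk_of C) ! i" "fst (walk_of C) ! i \<in> cverts C"
proof -
  have r: "cycle_walk F C (fst (walk_of C)) (snd (walk_of C))" by (rule walk_of[OF C])
  show v: "fst (walk_of C) ! i \<in> cverts C" using cycle_walk_cverts[OF r] i by simp
  have "fst (walk_of C) ! i \<in> I" using HQ_cverts_interior[OF F_in_HQ cycles_is_cycle[OF C]] v by blast
  thus "hq_assign (fst (walk_of C) ! i) = snd (walk_of C) ! i"
    unfolding hq_assign_def using v C cycle_edge[OF C i] by auto
qed

lemma hq_assign_cycle:
  assumes C: "C \<in> Cyc" and v: "v \<in> cverts C"
  shows "hq_assign v \<in> C \<and> v \<in> dends og (hq_assign v)"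
proof -
  let ?vs = "fst (walk_of C)" and ?es = "snd (walk_of C)"
  have r: "cycle_walk F C ?vs ?es" by (rule walk_of[OF C])
  obtain i where i: "i < length ?vs" "?vs ! i = v" using v cycle_walk_cverts[OF r] by (auto simp: in_set_conv_nth)
  have "?es ! i \<in> C" "v \<in> dends og (?es ! i)"
    using r i nth_mem[of i ?es] unfolding cycle_walk_def by auto
  thus ?thesis using hq_assign_walk_nth(1)[OF C i(1)] i(2) by simp
qed

lemma hq_assign_acyclic:
  assumes vI: "v \<in> I" and nc: "v \<notin> \<Union>(cverts ` Cyc)"
  shows "hq_assign v \<in> forest \<and> (\<exists>y. dends og (hq_assign v) = {v, y} \<and> root_dist y < root_dist v)"
proof -
  have nR: "v \<notin> roots" using vI nc by blast
  have vX: "v \<in> X" using vI by blast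
  have "descent v \<in> forest \<and> (\<exists>y. dends og (descent v) = {v, y} \<and> root_dist y < root_dist v)" by (rule descent[OF vX nR])
  thus ?thesis unfolding hq_assign_def using vI nc by simp
qed

lemma hq_assign_in: assumes "v \<in> I" shows "hq_assign v \<in> F \<and> v \<in> dends og (hq_assign v)"
proof (cases "v \<in> \<Union>(cverts ` Cyc)")
  case True
  then obtain C where "C \<in> Cyc" "v \<in> cverts C" by blast
  thus ?thesis using hq_assign_cycle cycles_is_cycle is_cycle_subset by blast
next
  case False thus ?thesis using hq_assign_acyclic[OF assms] by auto
qed

lemma hq_assign_in_cyc_edges_iff:
  assumes "v \<in> I"
  shows "hq_assign v \<in> cyc_edges \<longleftrightarrow> v \<in> \<Union>(cverts ` Cyc)"
  using hq_assign_cycle hq_assign_acyclic[OF assms] by blast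

lemma inj_on_hq_assign_cycle:
  assumes C: "C \<in> Cyc" "v \<in> cverts C" and C': "C' \<in> Cyc" "v' \<in> cverts C'"
    and eq: "hq_assign v = hq_assign v'"
  shows "v = v'"
proof -
  obtain x where "x \<in> dends og (hq_assign v)" using hq_assign_cycle[OF C] by blast
  hence "x \<in> cverts C" "x \<in> cverts C'"
    using hq_assign_cycle[OF C] hq_assign_cycle[OF C'] eq unfolding cverts_def by auto
  hence CC: "C' = C" using HQ_cycles_disjoint[OF F_in_HQ cycles_is_cycle[OF C(1)] cycles_is_cycle[OF C'(1)]] by blast
  let ?vs = "fst (walk_of C)" and ?es = "snd (walk_of C)"
  have r: "cycle_walk F C ?vs ?es" by (rule walk_of[OF C(1)])
  obtain i j where ij: "i < length ?vs" "?vs ! i = v" "j < length ?vs" "?vs ! j = v'"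
    using C(2) C'(2) CC cycle_walk_cverts[OF r] by (auto simp: in_set_conv_nth)
  hence "?es ! i = ?es ! j" using eq hq_assign_walk_nth(1)[OF C(1)] by metis
  moreover have "distinct ?es" "length ?es = length ?vs" using r unfolding cycle_walk_def by auto
  ultimately have "i = j" using ij by (simp add: nth_eq_iff_index_eq)
  thus "v = v'" using ij by simp
qed

lemma inj_on_hq_assign: "inj_on hq_assign I"
proof (rule inj_onI)
  fix v v' assume v: "v \<in> I" and v': "v' \<in> I" and eq: "hq_assign v = hq_assign v'"
  consider (cycle) "v \<in> \<Union>(cverts ` Cyc)" "v' \<in> \<Union>(cverts ` Cyc)"
    | (acyclic) "v \<notin> \<Union>(cverts ` Cyc)" "v' \<notin> \<Union>(cverts ` Cyc)"
    | (mixed) "(v \<in> \<Union>(cverts ` Cyc)) \<noteq> (v' \<in> \<Union>(cverts ` Cyc))" by blast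
  thus "v = v'"
  proof cases
    case cycle thus ?thesis using inj_on_hq_assign_cycle eq by blast
  next
    case acyclic
    obtain y y' where "dends og (hq_assign v) = {v, y}" "root_dist y < root_dist v"
      "dends og (hq_assign v') = {v', y'}" "root_dist y' < root_dist v'"
      using hq_assign_acyclic[OF v acyclic(1)] hq_assign_acyclic[OF v' acyclic(2)] by blast
    thus ?thesis using eq by (auto simp: doubleton_eq_iff)
  next
    case mixed
    have "(v \<in> \<Union>(cverts ` Cyc)) = (v' \<in> \<Union>(cverts ` Cyc))"
      unfolding hq_assign_in_cyc_edges_iff[OF v, symmetric] hq_assign_in_cyc_edges_iff[OF v', symmetric] eq ..
    thus ?thesis using mixed by contradiction
  qed
qed

lemma boundary_component_roots:
  assumes b: "b \<in> dX" and r: "r \<in> roots" "r \<in> comp_vertices X og F b"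
  shows "r = b"
proof -
  let ?W = "comp_vertices X og F b"
  have bX: "b \<in> X" using b boundary_subset by blast
  have "(card (?W \<inter> dX) = 1 \<and> cycles og (comp_edges og F ?W) = {}) \<or>
      (?W \<inter> dX = {} \<and> (\<exists>C. cycles og (comp_edges og F ?W) = {C} \<and> odd (card C)))"
    using F_in_HQ comp_in_components[OF bX] unfolding HQ_def by blast
  hence W: "card (?W \<inter> dX) = 1" "cycles og (comp_edges og F ?W) = {}"
    using b comp_vertices_self[OF bX] by auto
  have Wr: "comp_vertices X og F r = ?W" using comp_vertices_eq[OF F_subset_D r(2)] .
  show ?thesis
  proof (cases "r \<in> dX")
    case True
    hence "{r, b} \<subseteq> ?W \<inter> dX" using b r(2) comp_vertices_self[OF bX] by auto
    thus ?thesis using W(1) by (metis card_1_singletonE insert_subset singletonD)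
  next
    case False
    then obtain C where "C \<in> Cyc" "r \<in> cverts C" using r(1) by blast
    thus ?thesis using HQ_unique_cycle(1)[OF F_in_HQ cycles_is_cycle] W(2) Wr by fastforce
  qed
qed

lemma cycle_component_roots:
  assumes C: "C \<in> Cyc" "x \<in> cverts C" and r: "r \<in> roots" "r \<in> comp_vertices X og F x"
  shows "r \<in> cverts C"
proof -
  let ?W = "comp_vertices X og F x"
  have W: "cycles og (comp_edges og F ?W) = {C}" "?W \<inter> dX = {}"
    using HQ_unique_cycle[OF F_in_HQ cycles_is_cycle[OF C(1)] C(2)] by auto
  then obtain C' where C': "C' \<in> Cyc" "r \<in> cverts C'" using r by blast
  have "comp_vertices X og F r = ?W" using comp_vertices_eq[OF F_subset_D r(2)] .
  hence "C' = C" using HQ_unique_cycle(1)[OF F_in_HQ cycles_is_cycle[OF C'(1)] C'(2)] W(1) by simp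
  thus ?thesis using C' by simp
qed

text \<open>Two roots of the same component are either equal or lie on its unique cycle, so they stay
  connected after deleting an edge off the cycles.\<close>

lemma roots_connected_avoiding:
  assumes r1: "r1 \<in> roots" and r2: "r2 \<in> roots" and c: "(adj F)\<^sup>*\<^sup>* r1 r2" and e: "e \<notin> cyc_edges"
  shows "(adj (F - {e}))\<^sup>*\<^sup>* r1 r2"
proof -
  have r2W: "r2 \<in> comp_vertices X og F r1"
    using c r2 roots_subset_X unfolding comp_vertices_def by blast
  show ?thesis
  proof (cases "r1 \<in> dX")
    case True thus ?thesis using boundary_component_roots[OF True r2 r2W] by simp
  next
    case False
    then obtain C where C: "C \<in> Cyc" "r1 \<in> cverts C" using r1 by blast
    obtain vs es where rc: "cycle_walk F C vs es" using cycles_is_cycle[OF C(1)] is_cycle_iff_walk by blast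
    have "(adj C)\<^sup>*\<^sup>* r1 r2"
      using cycle_walk_reach[OF rc] cycle_walk_cverts[OF rc] C cycle_component_roots[OF C r2 r2W] by simp
    moreover have "C \<subseteq> F - {e}" using C(1) e cycles_is_cycle[OF C(1)] is_cycle_subset by blast
    ultimately show ?thesis by (rule rtranclp_adj_mono)
  qed
qed

lemma reach_root_avoiding:
  assumes e: "e \<notin> hq_assign ` I" and v: "v \<in> X"
  shows "\<exists>r\<in>roots. (adj (F - {e}))\<^sup>*\<^sup>* v r"
  using v
proof (induction "root_dist v" arbitrary: v rule: less_induct)
  case less
  show ?case
  proof (cases "v \<in> roots")
    case False
    hence vI: "v \<in> I" and nc: "v \<notin> \<Union>(cverts ` Cyc)" using less.prems by blast+
    obtain y where y: "dends og (hq_assign v) = {v, y}" "root_dist y < root_dist v"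
      using hq_assign_acyclic[OF vI nc] by blast
    have gF: "hq_assign v \<in> F" using hq_assign_in[OF vI] by blast
    hence "adj (F - {e}) v y" using y e vI by blast
    moreover have "y \<in> X" using y gF F_subset_D dends_subset_X by blast
    then obtain r where "r \<in> roots" "(adj (F - {e}))\<^sup>*\<^sup>* y r" using less.hyps y(2) by blast
    ultimately show ?thesis using converse_rtranclp_into_rtranclp[of "adj (F - {e})" v y] by blast
  qed blast
qed

lemma cycle_edges_in_hq_assign_image:
  assumes C: "C \<in> Cyc" and e: "e \<in> C"
  shows "e \<in> hq_assign ` I"
proof -
  let ?vs = "fst (walk_of C)" and ?es = "snd (walk_of C)"
  have r: "cycle_walk F C ?vs ?es" by (rule walk_of[OF C])
  obtain i where i: "i < length ?vs" "?es ! i = e"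
    using e r unfolding cycle_walk_def by (metis in_set_conv_nth)
  have v: "?vs ! i \<in> cverts C" using cycle_walk_cverts[OF r] i by simp
  have vI: "?vs ! i \<in> I" using HQ_cverts_interior[OF F_in_HQ cycles_is_cycle[OF C]] v by blast
  have "hq_assign (?vs ! i) = e" using hq_assign_walk_nth(1)[OF C i(1)] i(2) by simp
  thus ?thesis using vI by blast
qed

text \<open>An edge off the cycles that were missed by the assignment would close a new cycle: both its
  ends are joined to the roots without it.\<close>

lemma hq_assign_image: "hq_assign ` I = F"
proof (intro equalityI subsetI)
  fix e assume eF: "e \<in> F"
  show "e \<in> hq_assign ` I"
  proof (cases "e \<in> cyc_edges")
    case True thus ?thesis using cycle_edges_in_hq_assign_image by blast
  next
    case False
    show ?thesis
    proof (rule ccontr)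
      assume nimg: "e \<notin> hq_assign ` I"
      have not_loop: "e \<noteq> Lp x" for x using is_cycle_loop[of x F] eF False unfolding cycles_def by auto
      have "e \<in> D" using eF F_subset_D by blast
      then obtain a where a: "a \<in> A" "e = Ed (edge_of rv a)"
        using not_loop by (cases rule: dedges_cases) auto
      let ?x = "og a" and ?y = "tm a"
      have ends: "dends og e = {?x, ?y}" and xy: "?x \<noteq> ?y" and X: "?x \<in> X" "?y \<in> X"
        using a dends_edge_of arc_props[OF a(1)] by auto
      obtain r1 r2 where r: "r1 \<in> roots" "(adj (F - {e}))\<^sup>*\<^sup>* ?x r1" "r2 \<in> roots" "(adj (F - {e}))\<^sup>*\<^sup>* ?y r2"
        using reach_root_avoiding[OF nimg X(1)] reach_root_avoiding[OF nimg X(2)] by blast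
      have sub: "F - {e} \<subseteq> F" by blast
      have "adj F ?x ?y" using eF ends by blast
      hence "(adj F)\<^sup>*\<^sup>* r1 r2"
        using rtranclp_trans[OF rtranclp.rtrancl_into_rtrancl[OF rtranclp_adj_sym[OF rtranclp_adj_mono[OF r(2) sub]]]
            rtranclp_adj_mono[OF r(4) sub]] by blast
      hence "(adj (F - {e}))\<^sup>*\<^sup>* r1 r2" using roots_connected_avoiding r(1,3) False by blast
      hence "(adj (F - {e}))\<^sup>*\<^sup>* ?x ?y"
        using rtranclp_trans[OF rtranclp_trans[OF r(2)] rtranclp_adj_sym[OF r(4)]] by blast
      then obtain C where "is_cycle og F C" "e \<in> C" using cycle_through_edge[OF eF ends xy] by blast
      thus False using False unfolding cycles_def by blast
    qed
  qed
qed (use hq_assign_in in blast)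

definition hq_assignment :: "'v \<Rightarrow> ('v, 'a) dedge" where
  "hq_assignment = restrict hq_assign I"

lemma assign_hq_assignment: "assign F hq_assignment"
  unfolding assign_def
proof (intro conjI)
  show "hq_assignment \<in> I \<rightarrow>\<^sub>E F" unfolding hq_assignment_def using hq_assign_in by auto
  show "inj_on hq_assignment I" unfolding hq_assignment_def using inj_on_hq_assign by (simp add: inj_on_def)
  show "hq_assignment ` I = F" unfolding hq_assignment_def using hq_assign_image by simp
  show "\<forall>u\<in>I. u \<in> dends og (hq_assignment u)" unfolding hq_assignment_def using hq_assign_in by simp
qed

end

context hq_graph begin

definition cycle_component :: "('v, 'a) dedge set \<Rightarrow> 'v set" where
  "cycle_component C = comp_vertices X og F (SOME x. x \<in> cverts C)"

lemma cycle_component: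
  assumes cy: "is_cycle og F C"
  shows "cycle_component C \<in> components X og F" "cycles og (comp_edges og F (cycle_component C)) = {C}"
proof -
  have x: "(SOME x. x \<in> cverts C) \<in> cverts C" using cverts_nonempty[OF cy] by (simp add: some_in_eq)
  show "cycles og (comp_edges og F (cycle_component C)) = {C}"
    unfolding cycle_component_def by (rule HQ_unique_cycle(1)[OF F_in_HQ cy x])
  show "cycle_component C \<in> components X og F"
    unfolding cycle_component_def using comp_in_components HQ_cverts_interior[OF F_in_HQ cy] x by blast
qed

lemma cycle_component_eq:
  assumes W: "W \<in> components X og F" and C: "C \<in> cycles og (comp_edges og F W)"
  shows "cycle_component C = W"
proof -
  obtain u where u: "W = comp_vertices X og F u" using W unfolding components_def by blast
  have cy: "is_cycle og F C" and CW: "C \<subseteq> comp_edges og F W"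
    using C is_cycle_comp_edges_iff unfolding cycles_def by auto
  have "(SOME x. x \<in> cverts C) \<in> cverts C" using cverts_nonempty[OF cy] by (simp add: some_in_eq)
  hence "(SOME x. x \<in> cverts C) \<in> W" using cverts_subset_comp[OF CW] by blast
  thus ?thesis unfolding cycle_component_def using comp_vertices_eq[OF F_subset_D] u by blast
qed

lemma long_cycles_card_ge_3: "C \<in> long_cycles F \<Longrightarrow> card C \<ge> 3"
  using HQ_odd[OF F_in_HQ, of C] unfolding long_cycles_def by (cases "card C = 2") auto

lemma bnum_eq_card_long_cycles: "bnum X og F = card (long_cycles F)"
proof -
  let ?S = "{W\<in>components X og F. \<exists>C\<in>cycles og (comp_edges og F W). card C \<ge> 3}"
  have "inj_on cycle_component (long_cycles F)"
    using cycle_component(2) unfolding long_cycles_def by (intro inj_onI) (metis (no_types, lifting) mem_Collect_eq singleton_inject)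
  moreover have "cycle_component ` long_cycles F = ?S"
  proof (intro equalityI subsetI)
    fix W assume "W \<in> ?S"
    then obtain C where "W \<in> components X og F" "C \<in> cycles og (comp_edges og F W)" "card C \<ge> 3" by blast
    moreover from this have "C \<in> long_cycles F"
      using is_cycle_comp_edges_iff unfolding cycles_def long_cycles_def by auto
    ultimately show "W \<in> cycle_component ` long_cycles F" using cycle_component_eq by blast
  qed (use cycle_component long_cycles_card_ge_3 in \<open>auto simp: long_cycles_def\<close>)
  ultimately have "bij_betw cycle_component (long_cycles F) ?S" unfolding bij_betw_def ..
  thus ?thesis unfolding bnum_def by (simp add: bij_betw_same_card)
qed

end


context boundary_graph begin

lemma Ttri_long_cycles:
  assumes T: "F \<in> Ttri X dX A og rv"
  shows "long_cycles F \<noteq> {} \<and> (\<forall>C\<in>long_cycles F. odd (card C))"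
proof
  have H: "F \<in> HQ X dX A og rv" using T unfolding Ttri_def by blast
  obtain W C where "W \<in> components X og F" "C \<in> cycles og (comp_edges og F W)" "card C \<ge> 3"
    using T unfolding Ttri_def by blast
  hence "is_cycle og F C" "card C \<ge> 2" using is_cycle_comp_edges_iff unfolding cycles_def by auto
  thus "long_cycles F \<noteq> {}" unfolding long_cycles_def by blast
  show "\<forall>C\<in>long_cycles F. odd (card C)" using HQ_odd[OF H] unfolding long_cycles_def by blast
qed

lemma assignmentI: "F \<subseteq> D \<Longrightarrow> assign F f \<Longrightarrow> assignment X dX A og tm rv F f"
  by (intro assignment.intro assignment_axioms.intro) (rule boundary_graph_axioms)

lemma hq_graphI: "F \<in> HQ X dX A og rv \<Longrightarrow> hq_graph X dX A og tm rv F"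
  by (intro hq_graph.intro hq_graph_axioms.intro) (rule boundary_graph_axioms)

lemma Ttri_has_assign: "F \<in> Ttri X dX A og rv \<Longrightarrow> \<exists>f. assign F f"
  using hq_graph.assign_hq_assignment[OF hq_graphI] unfolding Ttri_def by blast

end

context assignment begin

lemma Ttri_iff_long_cycles_odd:
  "F \<in> Ttri X dX A og rv \<longleftrightarrow> long_cycles F \<noteq> {} \<and> (\<forall>C\<in>long_cycles F. odd (card C))"
  using Ttri_long_cycles assign_Ttri by blast

lemma card_assign: "card {g. assign F g} = 2 ^ card (long_cycles F)"
  using card_assign_compatible card_compatible by simp

end

section \<open>The Cauchy--Binet terms\<close>

context boundary_graph begin

definition cb_term :: "('v \<Rightarrow> ('v, 'a) dedge \<Rightarrow> complex) \<Rightarrow> ('v, 'a) dedge set \<Rightarrow> complex" where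
  "cb_term N F = (\<Sum>f\<in>{f\<in>I \<rightarrow>\<^sub>E D. inj_on f I \<and> f ` I = F}.
          \<Sum>p\<in>{p. p permutes I}. of_int (sign p) * (\<Prod>u\<in>I. N u (f u) * N (p u) (f u)))"

lemma prod_unsigned_inc_mult:
  "(\<Prod>u\<in>I. unsigned_inc u (f u) * unsigned_inc (p u) (f u)) =
     (if \<forall>u\<in>I. u \<in> dends og (f u) \<and> p u \<in> dends og (f u) then 1 else 0)"
  by (simp add: unsigned_inc_mult prod_if_all[OF finite_I] cong: prod.cong)

lemma prod_signed_inc_mult:
  assumes "f ` I \<subseteq> D"
  shows "(\<Prod>u\<in>I. signed_inc u (f u) * signed_inc (p u) (f u)) =
     (if \<forall>u\<in>I. u \<in> dends og (f u) \<and> p u \<in> dends og (f u) then (-1) ^ card {u\<in>I. p u \<noteq> u} else 0)"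
proof -
  have "(\<Prod>u\<in>I. signed_inc u (f u) * signed_inc (p u) (f u)) =
      (\<Prod>u\<in>I. if u \<in> dends og (f u) \<and> p u \<in> dends og (f u) then (if u = p u then 1 else -1) else 0)"
    using assms by (intro prod.cong refl) (simp add: signed_inc_mult image_subset_iff)
  also have "(\<Prod>u\<in>I. (if u = p u then 1 else -1)) = (\<Prod>u\<in>{u\<in>I. p u \<noteq> u}. (-1::complex))"
    by (subst prod.inter_filter[OF finite_I]) (rule prod.cong, auto)
  ultimately show ?thesis by (simp add: prod_if_all[OF finite_I])
qed

text \<open>Only bijections \<open>f : I \<rightarrow> F\<close> with \<open>u \<in> f u\<close> and permutations \<open>p\<close> with \<open>p u \<in> f u\<close> survive in
  both expansions, and for them the two products differ only by the sign \<open>(-1)\<^sup>#\<^sup>m\<^sup>o\<^sup>v\<^sup>e\<^sup>d\<close>.\<close>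

lemma cb_term_diff_eq_sum_assign:
  assumes FD: "F \<subseteq> D"
  shows "cb_term unsigned_inc F - cb_term signed_inc F =
    (\<Sum>f\<in>{g. assign F g}. \<Sum>p\<in>{p. p permutes I \<and> (\<forall>u\<in>I. p u \<in> dends og (f u))}.
       of_int (sign p) * (1 - (-1) ^ card {u\<in>I. p u \<noteq> u}))"
proof -
  let ?B = "{f\<in>I \<rightarrow>\<^sub>E D. inj_on f I \<and> f ` I = F}" and ?P = "{p. p permutes I}"
  let ?ad = "\<lambda>f. \<forall>u\<in>I. u \<in> dends og (f u)" and ?cp = "\<lambda>f p. \<forall>u\<in>I. p u \<in> dends og (f u)"
  let ?phi = "\<lambda>p. of_int (sign p) * (1 - (-1) ^ card {u\<in>I. p u \<noteq> u}) :: complex"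
  have finB: "finite ?B" using finite_I finite_D by (simp add: finite_PiE)
  have finP: "finite ?P" using finite_I finite_permutations by blast
  have term_diff: "of_int (sign p) * (\<Prod>u\<in>I. unsigned_inc u (f u) * unsigned_inc (p u) (f u))
      - of_int (sign p) * (\<Prod>u\<in>I. signed_inc u (f u) * signed_inc (p u) (f u))
      = (if ?ad f \<and> ?cp f p then ?phi p else 0)" if "f \<in> ?B" for f p
  proof -
    have "f ` I \<subseteq> D" using that by auto
    thus ?thesis unfolding prod_unsigned_inc_mult prod_signed_inc_mult[OF \<open>f ` I \<subseteq> D\<close>]
      by (simp add: right_diff_distrib ball_conj_distrib)
  qed
  have "cb_term unsigned_inc F - cb_term signed_inc F =
      (\<Sum>f\<in>?B. \<Sum>p\<in>?P. if ?ad f \<and> ?cp f p then ?phi p else 0)"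
    unfolding cb_term_def sum_subtractf[symmetric] by (intro sum.cong refl) (rule term_diff)
  also have "\<dots> = (\<Sum>f\<in>?B. if ?ad f then \<Sum>p\<in>{p\<in>?P. ?cp f p}. ?phi p else 0)"
    by (intro sum.cong refl) (rule sum_if_conj[OF finP])
  also have "\<dots> = (\<Sum>f\<in>{f\<in>?B. ?ad f}. \<Sum>p\<in>{p\<in>?P. ?cp f p}. ?phi p)"
    by (rule sum.inter_filter[OF finB, symmetric])
  also have "{f\<in>?B. ?ad f} = {g. assign F g}"
    using FD unfolding assign_def by (auto simp: PiE_def)
  finally show ?thesis by simp
qed

text \<open>Each assignment of \<open>F\<close> contributes the same amount, and there are \<open>2\<^sup>b\<close> of them: one for every
  choice of orientation of the \<open>b\<close> long cycles.\<close>

lemma cb_term_diff: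
  assumes FD: "F \<subseteq> D"
  shows "cb_term unsigned_inc F - cb_term signed_inc F =
    (if F \<in> Ttri X dX A og rv then 4 ^ bnum X og F else 0)"
proof (cases "\<exists>f. assign F f")
  case True
  then obtain f where f: "assign F f" by blast
  interpret assignment X dX A og tm rv F f using assignmentI[OF FD f] .
  let ?val = "if long_cycles F \<noteq> {} \<and> (\<forall>C\<in>long_cycles F. odd (card C)) then 2 ^ card (long_cycles F) else 0 :: complex"
  have "(\<Sum>p\<in>{p. p permutes I \<and> (\<forall>u\<in>I. p u \<in> dends og (g u))}.
      of_int (sign p) * (1 - (-1) ^ card {u\<in>I. p u \<noteq> u})) = ?val" if "assign F g" for g
    using assignment.sum_compatible[OF assignmentI[OF FD that]]
    unfolding assignment.compatible_def[OF assignmentI[OF FD that]] .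
  hence "cb_term unsigned_inc F - cb_term signed_inc F = of_nat (card {g. assign F g}) * ?val"
    unfolding cb_term_diff_eq_sum_assign[OF FD] by simp
  moreover have "bnum X og F = card (long_cycles F)" if "F \<in> Ttri X dX A og rv"
    using hq_graph.bnum_eq_card_long_cycles[OF hq_graphI] that unfolding Ttri_def by blast
  ultimately show ?thesis
    by (simp add: card_assign Ttri_iff_long_cycles_odd power_mult_distrib[symmetric])
next
  case False
  hence no_assign: "{g. assign F g} = {}" by blast
  thus ?thesis unfolding cb_term_diff_eq_sum_assign[OF FD] no_assign using False Ttri_has_assign by auto
qed

lemma det_diff_eq_sum_cb_term:
  "det_on I (\<lambda>u v. op_matrix (MV_op A og tm rv w V) u v - (if u = v then z else 0))
     - (-1) ^ card I * det_on I (\<lambda>u v. op_matrix (MV_op A og tm rv w (\<lambda>x. - V x)) u v + (if u = v then z else 0))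
   = (\<Sum>F\<in>Pow D. WQ A tm rv w V z F * (cb_term unsigned_inc F - cb_term signed_inc F))"
proof -
  let ?c = "wQ A tm rv w V z"
  have "det_on I (\<lambda>u v. op_matrix (MV_op A og tm rv w V) u v - (if u = v then z else 0)) =
      det_on I (\<lambda>u v. \<Sum>e\<in>D. unsigned_inc u e * ?c e * unsigned_inc v e)"
    by (rule det_on_cong) (simp add: gram_unsigned_inc)
  moreover have "(-1) ^ card I * det_on I (\<lambda>u v. op_matrix (MV_op A og tm rv w (\<lambda>x. - V x)) u v + (if u = v then z else 0)) =
      det_on I (\<lambda>u v. \<Sum>e\<in>D. signed_inc u e * ?c e * signed_inc v e)"
    unfolding det_on_uminus[OF finite_I, symmetric] by (rule det_on_cong) (simp add: gram_signed_inc)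
  ultimately show ?thesis
    unfolding det_on_gram_expansion[OF finite_I finite_D] cb_term_def[symmetric] WQ_def
    by (simp add: sum_subtractf right_diff_distrib)
qed

end

theorem mainTheorem4:
  fixes X dX :: "'v set" and A :: "'a set"
    and og tm :: "'a \<Rightarrow> 'v" and rv :: "'a \<Rightarrow> 'a"
    and w :: "'a set \<Rightarrow> complex" and V :: "'v \<Rightarrow> complex" and z :: complex
  assumes "sym_digraph X A og tm rv"
    and "digraph_connected X A og tm"
    and "dX \<subset> X"
  shows "det_on (X - dX) (\<lambda>u v. op_matrix (MV_op A og tm rv w V) u v - (if u = v then z else 0))
       - (-1) ^ card (X - dX) *
         det_on (X - dX) (\<lambda>u v. op_matrix (MV_op A og tm rv w (\<lambda>x. - V x)) u v + (if u = v then z else 0))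
     = (\<Sum>H\<in>Ttri X dX A og rv. 4 ^ bnum X og H * WQ A tm rv w V z H)"
proof -
  interpret boundary_graph X dX A og tm rv using assms(1,3) by unfold_locales auto
  have "{F\<in>Pow D. F \<in> Ttri X dX A og rv} = Ttri X dX A og rv" unfolding Ttri_def HQ_def by blast
  hence "(\<Sum>F\<in>Pow D. if F \<in> Ttri X dX A og rv then 4 ^ bnum X og F * WQ A tm rv w V z F else 0) =
      (\<Sum>H\<in>Ttri X dX A og rv. 4 ^ bnum X og H * WQ A tm rv w V z H)"
    using sum.inter_filter[OF finite_Pow_iff[THEN iffD2, OF finite_D],
        of "\<lambda>F. 4 ^ bnum X og F * WQ A tm rv w V z F" "\<lambda>F. F \<in> Ttri X dX A og rv"] by simp
  moreover have "(\<Sum>F\<in>Pow D. WQ A tm rv w V z F * (cb_term unsigned_inc F - cb_term signed_inc F)) =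
      (\<Sum>F\<in>Pow D. if F \<in> Ttri X dX A og rv then 4 ^ bnum X og F * WQ A tm rv w V z F else 0)"
    by (intro sum.cong refl) (simp add: cb_term_diff)
  ultimately show ?thesis by (simp add: det_diff_eq_sum_cb_term)
qed

end
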